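(* Let $k$ be an unramified non-archimedean local field of residue characteristic $2$ (so $e=1$ and we take $\varpi=2$). Let $B(x)=x_1^2+x_2^2-a(x_3^2+x_4^2)$ on $k^4$, where $a=1+2u$, $u$ is a unit, and the Hilbert symbol $(a,-1)=-1$. Let $z=q^{-\beta}$, $w=zq^{-1}$, and $t\in\mathfrak o\setminus\{0\}$ with $|t|=q^{-T}$. Then \[ X^B(\beta;1)=\frac{|2|}{1-w}, \] and, if $T\ge1$, \[ X^B(\beta;t^2)=\frac{|2|}{1-wq^{-1}}+w^{2T}q^{-2T}\,\frac{1-wq^{-2}}{(1-w)(1-wq^{-1})}. \]
   Context: $k$ has ring of integers $\mathfrak o$, residue field of cardinality $q$, absolute value normalized by $|2|=q^{-1}$. On $\mathfrak o^n$ use the additive Haar measure of total mass $1$. For a quadratic form $B$ on $k^n$, $\rho\in\mathfrak o$ and integer $\ell\ge0$: $X_\ell^B(\rho)=\operatorname{meas}\{x\in\mathfrak o^n: B(x)-\rho\in 2^{\ell+1}\mathfrak o\}$ and $X^B(\beta;\rho)=\sum_{\ell\ge0}z^\ell X_\ell^B(\rho)$ with $z=q^{-\beta}$. $(\cdot,\cdot)$ is the Hilbert symbol of $k$. *)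

theory Defs
  imports "HOL-Analysis.Analysis"
begin

text \<open>A non-archimedean local field k is modelled by a field type 'k together with an
  absolute value nabs. The ring of integers o = {x. nabs x \<le> 1}.\<close>

definition ointeg :: "('k::field \<Rightarrow> real) \<Rightarrow> 'k set" where
  "ointeg nabs = {x. nabs x \<le> 1}"

text \<open>Cardinality q of the residue field o / m, m = {x. nabs x < 1}.\<close>
definition residue_card :: "('k::field \<Rightarrow> real) \<Rightarrow> nat" where
  "residue_card nabs = card ((\<lambda>x. {y \<in> ointeg nabs. nabs (x - y) < 1}) ` ointeg nabs)"

text \<open>nabs is a non-archimedean absolute value making 'k a complete discretely valued
  field with finite residue field, unramified of residue characteristic 2: the value group is
  generated by nabs 2 (so 2 is a uniformizer, e = 1), normalized by nabs 2 = 1/q.\<close>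
definition unram_2adic_local_field :: "('k::field \<Rightarrow> real) \<Rightarrow> bool" where
  "unram_2adic_local_field nabs \<longleftrightarrow>
     (\<forall>x. nabs x \<ge> 0) \<and> (\<forall>x. nabs x = 0 \<longleftrightarrow> x = 0) \<and>
     (\<forall>x y. nabs (x * y) = nabs x * nabs y) \<and>
     (\<forall>x y. nabs (x + y) \<le> max (nabs x) (nabs y)) \<and>
     (\<forall>f::nat \<Rightarrow> 'k. (\<forall>\<epsilon>>0. \<exists>N. \<forall>m\<ge>N. \<forall>n\<ge>N. nabs (f m - f n) < \<epsilon>) \<longrightarrow>
         (\<exists>L. \<forall>\<epsilon>>0. \<exists>N. \<forall>n\<ge>N. nabs (f n - L) < \<epsilon>)) \<and>
     finite ((\<lambda>x. {y \<in> ointeg nabs. nabs (x - y) < 1}) ` ointeg nabs) \<and>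
     (\<forall>x. x \<noteq> 0 \<longrightarrow> (\<exists>n::int. nabs x = nabs 2 powi n)) \<and>
     nabs 2 = 1 / real (residue_card nabs)"

definition hilbert_symbol :: "'k::field \<Rightarrow> 'k \<Rightarrow> int" where
  "hilbert_symbol a b =
     (if \<exists>x y z. (x, y, z) \<noteq> (0, 0, 0) \<and> z ^ 2 = a * x ^ 2 + b * y ^ 2 then 1 else -1)"

text \<open>Vectors of k^n are modelled as functions nat \<Rightarrow> 'k vanishing from index n on;
  the box o^n.\<close>
definition obox :: "('k::field \<Rightarrow> real) \<Rightarrow> nat \<Rightarrow> (nat \<Rightarrow> 'k) set" where
  "obox nabs n = {x. (\<forall>i<n. nabs (x i) \<le> 1) \<and> (\<forall>i\<ge>n. x i = 0)}"

definition vcong :: "('k::field \<Rightarrow> real) \<Rightarrow> nat \<Rightarrow> nat \<Rightarrow> (nat \<Rightarrow> 'k) \<Rightarrow> (nat \<Rightarrow> 'k) \<Rightarrow> bool" where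
  "vcong nabs n m x y \<longleftrightarrow> (\<forall>i<n. nabs (x i - y i) \<le> nabs 2 ^ m)"

text \<open>Haar measure (total mass 1) on o^n, given as outer content: infimum over m of
  (number of classes mod 2^m o^n meeting S) * q^(-n m). On compact open sets (finite unions of
  cosets of some 2^M o^n, in particular the sets used below) this is exactly the normalized
  additive Haar measure.\<close>
definition haar_meas :: "('k::field \<Rightarrow> real) \<Rightarrow> nat \<Rightarrow> (nat \<Rightarrow> 'k) set \<Rightarrow> real" where
  "haar_meas nabs n S =
     (INF m::nat. real (card ((\<lambda>x. {y \<in> obox nabs n. vcong nabs n m x y}) ` S))
                    / real (residue_card nabs) ^ (n * m))"

definition X_l :: "('k::field \<Rightarrow> real) \<Rightarrow> nat \<Rightarrow> ((nat \<Rightarrow> 'k) \<Rightarrow> 'k) \<Rightarrow> 'k \<Rightarrow> nat \<Rightarrow> real" where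
  "X_l nabs n B \<rho> l =
     haar_meas nabs n {x \<in> obox nabs n. nabs (B x - \<rho>) \<le> nabs 2 ^ (l + 1)}"

end

theory Submission
  imports Defs
begin

text \<open>
  The form B is the reduced norm of the quaternion division algebra (a,-1), so it is
  anisotropic and multiplicative: left multiplication by a quaternion d of unit norm is a
  measure preserving bijection of o^4 that multiplies B by B(d). As the norm hits every unit
  modulo every power of 2, the set {B(x) = \<rho> mod 2^(l+1)} has the same measure for all units
  \<rho>, and counting residue classes gives X_l(\<rho>) = |2|^(l+1).
  For |\<rho>| \<le> |4| and l \<ge> 2, anisotropy forces a solution of B(x) = \<rho> mod 2^(l+1) either into
  2o^4, which reproduces the problem for \<rho>/4 at level l-2 scaled by q^-4, or into the class of
  vectors x with unit x_0 and all x_i = x_0 mod 2, whose norm has absolute value exactly |4|;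
  the latter contributes only when |\<rho>| = |4|, and is counted like the unit case.
  Solving this recursion gives X_l(t^2) in closed form, and the generating series are
  geometric.
\<close>

lemma card_image_eq_same_kernel:
  assumes "\<And>a b. a \<in> A \<Longrightarrow> b \<in> A \<Longrightarrow> f a = f b \<longleftrightarrow> h a = h b"
  shows "card (f ` A) = card (h ` A) \<and> (finite (f ` A) \<longleftrightarrow> finite (h ` A))"
proof -
  define g where "g c = f (SOME a. a \<in> A \<and> h a = c)" for c
  have gh: "g (h a) = f a" if "a \<in> A" for a
  proof -
    have "\<exists>a'. a' \<in> A \<and> h a' = h a" using that by blast
    hence "(SOME a'. a' \<in> A \<and> h a' = h a) \<in> A \<and> h (SOME a'. a' \<in> A \<and> h a' = h a) = h a"
      by (rule someI_ex)
    thus ?thesis unfolding g_def using assms that by blast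
  qed
  have im: "f ` A = g ` (h ` A)" using gh by (auto simp: image_iff)
  have inj: "inj_on g (h ` A)"
  proof (rule inj_onI)
    fix x y assume "x \<in> h ` A" "y \<in> h ` A" "g x = g y"
    then obtain a b where "a \<in> A" "b \<in> A" "x = h a" "y = h b" by blast
    thus "x = y" using \<open>g x = g y\<close> gh assms by auto
  qed
  show ?thesis using im inj card_image finite_image_iff by metis
qed

lemma card_by_fibres:
  assumes B: "finite B" and fA: "f ` A \<subseteq> B"
    and fin: "\<And>b. b \<in> B \<Longrightarrow> finite {a\<in>A. f a = b}"
    and k: "\<And>b. b \<in> B \<Longrightarrow> card {a\<in>A. f a = b} = k"
  shows "card A = k * card B \<and> finite A"
proof -
  have A: "A = (\<Union>b\<in>B. {a\<in>A. f a = b})" using fA by auto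
  have "card (\<Union>b\<in>B. {a\<in>A. f a = b}) = (\<Sum>b\<in>B. card {a\<in>A. f a = b})"
    by (rule card_UN_disjoint) (use B fin in auto)
  also have "\<dots> = k * card B" using k by simp
  finally have c: "card A = k * card B" using A by simp
  have "finite A" by (subst A) (rule finite_UN_I[OF B fin])
  thus ?thesis using c by simp
qed

lemma card_le_by_fibres:
  assumes B: "finite B" and fA: "f ` A \<subseteq> B"
    and fin: "\<And>b. b \<in> B \<Longrightarrow> finite {a\<in>A. f a = b}"
    and k: "\<And>b. b \<in> B \<Longrightarrow> card {a\<in>A. f a = b} \<le> k"
  shows "card A \<le> k * card B \<and> finite A"
proof -
  have A: "A = (\<Union>b\<in>B. {a\<in>A. f a = b})" using fA by auto
  have "card (\<Union>b\<in>B. {a\<in>A. f a = b}) = (\<Sum>b\<in>B. card {a\<in>A. f a = b})"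
    by (rule card_UN_disjoint) (use B fin in auto)
  also have "\<dots> \<le> k * card B"
    using k sum_bounded_above[of B "\<lambda>b. card {a\<in>A. f a = b}" k] by (simp add: mult.commute)
  finally have c: "card A \<le> k * card B" using A by simp
  have "finite A" by (subst A) (rule finite_UN_I[OF B fin])
  thus ?thesis using c by simp
qed

section \<open>Unramified 2-adic fields\<close>

locale unram_2adic_field =
  fixes nabs :: "'k::field \<Rightarrow> real"
  assumes unram_2adic: "unram_2adic_local_field nabs"
begin

definition p :: real where "p = nabs 2"

abbreviation q :: nat where "q \<equiv> residue_card nabs"

definition residue :: "'k \<Rightarrow> 'k set" where
  "residue x = {y \<in> ointeg nabs. nabs (x - y) < 1}"

lemma nabs_nonneg [simp]: "nabs x \<ge> 0"
  and nabs_eq_0_iff [simp]: "nabs x = 0 \<longleftrightarrow> x = 0"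
  and nabs_mult: "nabs (x * y) = nabs x * nabs y"
  and nabs_add_le_max: "nabs (x + y) \<le> max (nabs x) (nabs y)"
  and finite_residues: "finite (residue ` ointeg nabs)"
  and p_eq: "p = 1 / real q"
  using unram_2adic unfolding unram_2adic_local_field_def residue_def p_def by simp_all

lemma nabs_discrete: "x \<noteq> 0 \<Longrightarrow> \<exists>n::int. nabs x = p powi n"
  using unram_2adic unfolding unram_2adic_local_field_def p_def by (elim conjE) blast

lemma nabs_complete:
  fixes f :: "nat \<Rightarrow> 'k"
  assumes "\<forall>\<epsilon>>0. \<exists>N. \<forall>m\<ge>N. \<forall>n\<ge>N. nabs (f m - f n) < \<epsilon>"
  shows "\<exists>L. \<forall>\<epsilon>>0. \<exists>N. \<forall>n\<ge>N. nabs (f n - L) < \<epsilon>"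
  using unram_2adic assms unfolding unram_2adic_local_field_def by blast

lemma nabs_zero [simp]: "nabs 0 = 0"
  by simp

lemma nabs_one [simp]: "nabs 1 = 1"
proof -
  have "nabs 1 = nabs 1 * nabs 1" using nabs_mult[of 1 1] by simp
  moreover have "nabs 1 \<noteq> 0" by simp
  ultimately show ?thesis by simp
qed

lemma nabs_minus[simp]: "nabs (-x) = nabs x"
proof -
  have "nabs (-1) * nabs (-1) = 1" using nabs_mult[of "-1" "-1"] by simp
  hence "(nabs (-1))^2 = 1" by (simp add: power2_eq_square)
  hence "nabs (-1) = 1 \<or> nabs (-1) = -1" using power2_eq_1_iff by blast
  hence "nabs (-1) = 1" using nabs_nonneg[of "-1"] by linarith
  thus ?thesis using nabs_mult[of "-1" x] by simp
qed

lemma nabs_minus_commute: "nabs (x - y) = nabs (y - x)"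
  by (metis minus_diff_eq nabs_minus)

lemma nabs_diff_le_max: "nabs (x-y) \<le> max (nabs x) (nabs y)"
  using nabs_add_le_max[of x "-y"] by simp

lemma nabs_add_le: "nabs x \<le> M \<Longrightarrow> nabs y \<le> M \<Longrightarrow> nabs (x+y) \<le> M"
  using nabs_add_le_max[of x y] by simp
lemma nabs_diff_le: "nabs x \<le> M \<Longrightarrow> nabs y \<le> M \<Longrightarrow> nabs (x-y) \<le> M"
  using nabs_diff_le_max[of x y] by simp

lemma nabs_diff3_le: "nabs A \<le> M \<Longrightarrow> nabs B \<le> M \<Longrightarrow> nabs C \<le> M \<Longrightarrow> nabs D \<le> M \<Longrightarrow> nabs (A - B - C - D) \<le> M"
  by (rule nabs_diff_le[OF nabs_diff_le[OF nabs_diff_le]])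

lemma nabs_add3_le: "nabs A \<le> M \<Longrightarrow> nabs B \<le> M \<Longrightarrow> nabs C \<le> M \<Longrightarrow> nabs D \<le> M \<Longrightarrow> nabs (A + B + C + D) \<le> M"
  by (rule nabs_add_le[OF nabs_add_le[OF nabs_add_le]])

lemma nabs_power[simp]: "nabs (x^n) = nabs x ^ n"
  by (induction n) (simp_all add: nabs_mult)

lemma nabs_divide: "nabs (x/y) = nabs x / nabs y"
proof (cases "y = 0")
  case True thus ?thesis by simp
next
  case False
  have "nabs x = nabs (x/y) * nabs y" using nabs_mult[of "x/y" y] False by simp
  thus ?thesis using False by simp
qed

lemma nabs_mult_le: "nabs x \<le> A \<Longrightarrow> nabs y \<le> B \<Longrightarrow> nabs (x*y) \<le> A * B"
  by (simp add: nabs_mult mult_mono')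

lemma nabs_add_dominant: "nabs y < nabs x \<Longrightarrow> nabs (x + y) = nabs x"
proof -
  assume a: "nabs y < nabs x"
  have "nabs (x+y) \<le> nabs x" using nabs_add_le_max[of x y] a by simp
  moreover have "nabs x \<le> max (nabs (x+y)) (nabs y)" using nabs_add_le_max[of "x+y" "-y"] by simp
  ultimately show ?thesis using a by auto
qed

lemma nabs_diff_dominant: "nabs y < nabs x \<Longrightarrow> nabs (x - y) = nabs x"
  using nabs_add_dominant[of "-y" x] by simp

lemma q_eq_card_residues: "q = card (residue ` ointeg nabs)"
  unfolding residue_card_def residue_def by simp

lemma q_ge_2: "q \<ge> 2"
proof -
  have "0 \<in> ointeg nabs" "1 \<in> ointeg nabs" by (auto simp: ointeg_def)
  moreover have "residue 0 \<noteq> residue 1"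
  proof
    assume "residue 0 = residue 1"
    moreover have "1 \<in> residue 1" by (simp add: residue_def ointeg_def)
    ultimately have "1 \<in> residue 0" by simp
    thus False by (simp add: residue_def)
  qed
  ultimately have "{residue 0, residue 1} \<subseteq> residue ` ointeg nabs" by auto
  hence "card {residue 0, residue 1} \<le> q" using finite_residues q_eq_card_residues card_mono by metis
  thus ?thesis using \<open>residue 0 \<noteq> residue 1\<close> by simp
qed

lemma p_pos: "p > 0" using p_eq q_ge_2 by simp
lemma p_le_half: "p \<le> 1/2"
proof -
  have "real q \<ge> 2" using q_ge_2 by simp
  thus ?thesis by (simp add: p_eq divide_le_eq)
qed
lemma p_less_1: "p < 1" using p_le_half by simp
lemma nabs_two: "nabs 2 = p" by (simp add: p_def)
lemma nabs_two_power[simp]: "nabs (2^m) = p^m" by (simp add: p_def)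
lemma p_mult_q: "p * real q = 1" using p_eq q_ge_2 by simp

lemma integral_nabs_eq_p_power:
  assumes "x \<noteq> 0" "nabs x \<le> 1"
  shows "\<exists>n::nat. nabs x = p ^ n"
proof -
  obtain n::int where n: "nabs x = p powi n" using nabs_discrete assms by blast
  have "n \<ge> 0"
  proof (rule ccontr)
    assume "\<not> n \<ge> 0"
    hence "p powi n = inverse (p ^ nat (-n))" by (simp add: power_int_def power_inverse)
    moreover have "p ^ nat (-n) < 1" using p_pos p_less_1 \<open>\<not> n \<ge> 0\<close>
      by (simp add: power_less_one_iff)
    ultimately have "p powi n > 1" using p_pos
      by (simp add: one_less_inverse)
    thus False using n assms by simp
  qed
  thus ?thesis using n by (metis nonneg_int_cases power_int_of_nat)
qed

lemma p_power_le_iff: "p^m \<le> p^n \<longleftrightarrow> n \<le> m"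
  using p_pos p_less_1 by (simp add: power_decreasing_iff)
lemma p_power_less_iff: "p^m < p^n \<longleftrightarrow> n < m"
  using p_pos p_less_1 by (simp add: power_strict_decreasing_iff)

lemma p_Suc_power_less_1: "p^(Suc l) < 1" using p_power_le_iff[of "Suc l" 1] p_less_1 by simp

lemma p2_le_p: "p^2 \<le> p" using p_power_le_iff[of 2 1] by simp

lemma p2_mult_p_power: "l \<ge> 1 \<Longrightarrow> p^2 * p^(l-1) = p^(Suc l)"
  by (simp add: power_add[symmetric])

lemma q_power_mult_p_power: "real q ^ k * p ^ k = 1"
proof -
  have "real q * p = 1" using p_mult_q by (simp add: mult.commute)
  hence "(real q * p)^k = 1" by simp
  thus ?thesis by (simp add: power_mult_distrib)
qed

lemma nabs_less_p_power_imp_le: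
  assumes "nabs x < p^m"
  shows "nabs x \<le> p^(Suc m)"
proof (cases "x = 0")
  case True thus ?thesis using p_pos by simp
next
  case False
  have "nabs x \<le> 1" using assms p_pos p_less_1
    by (meson less_eq_real_def order.trans power_le_one)
  then obtain n where n: "nabs x = p^n" using integral_nabs_eq_p_power False by blast
  have "p^n < p^m" using assms n by simp
  hence "m < n" using p_power_less_iff by simp
  hence "p^n \<le> p^(Suc m)" using p_power_le_iff[of n "Suc m"] by simp
  thus ?thesis using n by simp
qed

lemma nabs_less_1_imp_le_p: "nabs x < 1 \<Longrightarrow> nabs x \<le> p"
  using nabs_less_p_power_imp_le[of x 0] by simp

lemma integral_unit_or_le_p: "nabs x \<le> 1 \<Longrightarrow> nabs x = 1 \<or> nabs x \<le> p"
  using nabs_less_1_imp_le_p by force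

lemma two_nonzero: "(2::'k) \<noteq> 0" using p_pos nabs_two by (metis nabs_eq_0_iff less_irrefl)

lemma ex_p_power_less: "\<epsilon> > 0 \<Longrightarrow> \<exists>N. p^N < \<epsilon>"
  using real_arch_pow_inv p_less_1 by blast

lemma p_power_less_mono: "p^n < \<epsilon> \<Longrightarrow> m \<ge> n \<Longrightarrow> p^m < \<epsilon>"
  using p_power_le_iff[of m n] by linarith

lemma converges_if_steps_le_p_power:
  fixes f :: "nat \<Rightarrow> 'k"
  assumes step: "\<And>n. nabs (f (Suc n) - f n) \<le> p^n"
  shows "\<exists>L. \<forall>\<epsilon>>0. \<exists>N. \<forall>n\<ge>N. nabs (f n - L) < \<epsilon>"
proof (rule nabs_complete)
  have tail: "nabs (f m - f n) \<le> p^n" if "n \<le> m" for m n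
    using that
  proof (induction m rule: dec_induct)
    case base thus ?case using p_pos by simp
  next
    case (step m)
    have "nabs (f (Suc m) - f m) \<le> p^n"
      using step(1) assms[of m] p_power_le_iff[of m n] by linarith
    hence "nabs ((f (Suc m) - f m) + (f m - f n)) \<le> p^n" using step(3) nabs_add_le by blast
    thus ?case by simp
  qed
  show "\<forall>\<epsilon>>0. \<exists>N. \<forall>m\<ge>N. \<forall>n\<ge>N. nabs (f m - f n) < \<epsilon>"
  proof (intro allI impI)
    fix \<epsilon> :: real assume "\<epsilon> > 0"
    then obtain N where N: "p^N < \<epsilon>" using ex_p_power_less by blast
    have "nabs (f m - f n) < \<epsilon>" if "m \<ge> N" "n \<ge> N" for m n
      using tail[of n m] tail[of m n] p_power_less_mono[OF N] that nabs_minus_commute[of "f m"]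
      by (cases "n \<le> m") (fastforce+)
    thus "\<exists>N. \<forall>m\<ge>N. \<forall>n\<ge>N. nabs (f m - f n) < \<epsilon>" by blast
  qed
qed

lemma nabs_eq_0_if_less_all:
  assumes "\<And>\<epsilon>. 0 < \<epsilon> \<Longrightarrow> \<epsilon> \<le> 1 \<Longrightarrow> nabs x < \<epsilon>"
  shows "x = 0"
proof (rule ccontr)
  assume "x \<noteq> 0"
  hence "0 < nabs x" using nabs_nonneg[of x] nabs_eq_0_iff[of x] by linarith
  hence "nabs x < min (nabs x) 1" using assms[of "min (nabs x) 1"] by simp
  thus False by linarith
qed

text \<open>The iteration e \<mapsto> -(c + e^2)/b contracts: e^2 - e'^2 = (e - e')(e + e') and |e + e'| \<le> |c| \<le> |2|.\<close>

lemma quadratic_iteration_bounds: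
  assumes b: "nabs b = 1" and c: "nabs c < 1"
  defines "e \<equiv> rec_nat 0 (\<lambda>n x. -(c + x^2)/b)"
  shows "nabs (e n) \<le> nabs c" and "nabs (e (Suc n) - e n) \<le> p^n"
proof -
  have b0: "b \<noteq> 0" using b by auto
  have eS: "e (Suc n) = -((c + (e n)^2)/b)" for n by (simp add: e_def minus_divide_left)
  have small: "nabs (e n) \<le> nabs c" for n
  proof (induction n)
    case 0 thus ?case by (simp add: e_def)
  next
    case (Suc n)
    have "nabs ((e n)^2) \<le> nabs c * nabs c" using Suc by (simp add: power2_eq_square nabs_mult_le)
    also have "\<dots> \<le> nabs c" using c by (simp add: mult_left_le_one_le)
    finally have "nabs (c + (e n)^2) \<le> nabs c" by (intro nabs_add_le) auto
    thus ?case by (simp add: eS nabs_divide b)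
  qed
  show "nabs (e n) \<le> nabs c" by (rule small)
  have cp: "nabs c \<le> p" using nabs_less_1_imp_le_p c by simp
  show "nabs (e (Suc n) - e n) \<le> p^n"
  proof (induction n)
    case 0 thus ?case using small[of 1] c by (simp add: e_def)
  next
    case (Suc n)
    have diff: "e (Suc (Suc n)) - e (Suc n) = - ((e (Suc n) - e n) * (e (Suc n) + e n)) / b"
      using b0 by (simp add: eS field_simps power2_eq_square)
    have "nabs (e (Suc n) + e n) \<le> p" using small cp nabs_add_le by (meson order_trans)
    hence "nabs ((e (Suc n) - e n) * (e (Suc n) + e n)) \<le> p^n * p"
      using Suc by (simp add: nabs_mult_le)
    thus ?case using diff by (simp add: nabs_divide b mult.commute)
  qed
qed

lemma hensel_quadratic:
  assumes b: "nabs b = 1" and c: "nabs c < 1"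
  shows "\<exists>e. nabs e < 1 \<and> b*e + c + e^2 = 0"
proof -
  define e where "e = rec_nat 0 (\<lambda>n x. -(c + x^2)/b)"
  note bounds = quadratic_iteration_bounds[OF b c, folded e_def]
  obtain L where L: "\<forall>\<epsilon>>0. \<exists>N. \<forall>n\<ge>N. nabs (e n - L) < \<epsilon>"
    using converges_if_steps_le_p_power bounds(2) by blast
  define G where "G x = b*x + c + x^2" for x
  have approx: "nabs (G L) < \<epsilon> \<and> nabs L < 1" if \<epsilon>: "\<epsilon> > 0" "\<epsilon> \<le> 1" for \<epsilon>
  proof -
    obtain N1 where N1: "p^N1 < \<epsilon>" using ex_p_power_less[OF \<epsilon>(1)] by blast
    obtain N2 where N2: "\<forall>n\<ge>N2. nabs (e n - L) < \<epsilon>" using L \<epsilon>(1) by blast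
    define n where "n = max N1 N2"
    have close: "nabs (L - e n) < \<epsilon>" using N2 nabs_minus_commute by (simp add: n_def)
    have "nabs L \<le> max (nabs (e n)) (nabs (e n - L))" using nabs_diff_le_max[of "e n" "e n - L"] by simp
    moreover have "nabs (e n - L) < 1" using N2[rule_format, of n] \<epsilon>(2) by (simp add: n_def)
    ultimately have L1: "nabs L < 1" using bounds(1)[of n] c by linarith
    have "nabs (G (e n)) < \<epsilon>"
    proof -
      have "b \<noteq> 0" using b by auto
      hence "G (e n) = b * (e n - e (Suc n))" by (simp add: G_def e_def field_simps)
      moreover have "p^n < \<epsilon>" using p_power_less_mono[OF N1] by (simp add: n_def)
      ultimately show ?thesis using bounds(2)[of n] b by (simp add: nabs_mult nabs_minus_commute)
    qed
    moreover have "nabs ((L - e n) * (b + L + e n)) < \<epsilon>"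
    proof -
      have "nabs (b + L + e n) \<le> 1" using b L1 bounds(1)[of n] c by (intro nabs_add_le) auto
      hence "nabs (L - e n) * nabs (b + L + e n) \<le> nabs (L - e n)" by (simp add: mult_left_le)
      thus ?thesis using close by (simp add: nabs_mult)
    qed
    moreover have "G L = G (e n) + (L - e n) * (b + L + e n)"
      by (simp add: G_def algebra_simps power2_eq_square)
    ultimately show ?thesis using L1 nabs_add_le_max[of "G (e n)" "(L - e n) * (b + L + e n)"] by simp
  qed
  hence "G L = 0" using nabs_eq_0_if_less_all by blast
  moreover have "nabs L < 1" using approx[of 1] by simp
  ultimately show ?thesis unfolding G_def by blast
qed

lemma nabs_of_nat_le_1: "nabs (of_nat n :: 'k) \<le> 1"
  by (induction n) (auto intro: nabs_add_le)
lemma nabs_numeral_le_1: "nabs (numeral n :: 'k) \<le> 1"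
  using nabs_of_nat_le_1[of "numeral n"] by simp
lemma integral_intros: "nabs x \<le> 1 \<Longrightarrow> nabs y \<le> 1 \<Longrightarrow> nabs (x*y) \<le> 1"
  "nabs x \<le> 1 \<Longrightarrow> nabs y \<le> 1 \<Longrightarrow> nabs (x+y) \<le> 1"
  "nabs x \<le> 1 \<Longrightarrow> nabs y \<le> 1 \<Longrightarrow> nabs (x-y) \<le> 1"
  "nabs x \<le> 1 \<Longrightarrow> nabs (-x) \<le> 1"
  "nabs x \<le> 1 \<Longrightarrow> nabs (x^n) \<le> 1"
  "nabs (1::'k) \<le> 1" "nabs (0::'k) \<le> 1" "nabs (numeral m :: 'k) \<le> 1"
  using nabs_mult_le[of x 1 y 1] nabs_add_le nabs_diff_le nabs_numeral_le_1
  by (auto simp: power_le_one)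

lemma nabs_two_mult_le: "nabs x \<le> 1 \<Longrightarrow> nabs (2*x) \<le> p"
  using nabs_mult_le[of 2 p x 1] nabs_two by simp
lemma nabs_half_le_1: "nabs x \<le> p \<Longrightarrow> nabs (x/2) \<le> 1"
  using p_pos by (simp add: nabs_divide nabs_two)
lemma nabs_mult_le_integral: "nabs x \<le> A \<Longrightarrow> nabs y \<le> 1 \<Longrightarrow> nabs (x*y) \<le> A"
  using nabs_mult_le[of x A y 1] by simp
lemma nabs_integral_mult_le: "nabs c \<le> 1 \<Longrightarrow> nabs t \<le> M \<Longrightarrow> nabs (c*t) \<le> M"
  using nabs_mult_le_integral[of t M c] by (simp add: mult.commute)

lemma nabs_four: "nabs (4::'k) = p^2"
  using nabs_two_power[of 2] by simp
lemma four_nonzero: "(4::'k) \<noteq> 0" using nabs_four p_pos by (metis nabs_eq_0_iff power_not_zero less_irrefl)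
lemma nabs_four_mult: "nabs (4*y) = p^2 * nabs y" by (simp add: nabs_mult nabs_four)

lemma four_mult_quarter_diff: "4 * (y / 4 - c) = y - 4*(c::'k)" using four_nonzero by (simp add: field_simps)

lemma four_mult_diff_quarter: "4 * (y - c / 4) = 4*y - (c::'k)" using four_nonzero by (simp add: field_simps)

lemma nabs_le_p_if_square_le_p: "nabs x \<le> 1 \<Longrightarrow> nabs (x^2) \<le> p \<Longrightarrow> nabs x \<le> p"
proof -
  assume a: "nabs x \<le> 1" "nabs (x^2) \<le> p"
  have "nabs x \<noteq> 1" using a(2) p_less_1 by auto
  thus ?thesis using integral_unit_or_le_p a(1) by blast
qed

section \<open>Residue classes modulo powers of 2 and Haar measure\<close>

definition vclass :: "nat \<Rightarrow> nat \<Rightarrow> (nat \<Rightarrow> 'k) \<Rightarrow> (nat \<Rightarrow> 'k) set" where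
  "vclass n m x = {y \<in> obox nabs n. vcong nabs n m x y}"
definition nclasses :: "nat \<Rightarrow> nat \<Rightarrow> (nat \<Rightarrow> 'k) set \<Rightarrow> nat" where
  "nclasses n m S = card (vclass n m ` S)"
definition saturated :: "nat \<Rightarrow> nat \<Rightarrow> (nat \<Rightarrow> 'k) set \<Rightarrow> bool" where
  "saturated n m S \<longleftrightarrow> S \<subseteq> obox nabs n \<and> (\<forall>x\<in>S. \<forall>y\<in>obox nabs n. vcong nabs n m x y \<longrightarrow> y \<in> S)"

lemma vcong_iff: "vcong nabs n m x y \<longleftrightarrow> (\<forall>i<n. nabs (x i - y i) \<le> p^m)"
  by (simp add: vcong_def p_def)
lemma obox_iff: "x \<in> obox nabs n \<longleftrightarrow> (\<forall>i<n. nabs (x i) \<le> 1) \<and> (\<forall>i\<ge>n. x i = 0)"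
  by (simp add: obox_def)
lemma vcong_refl: "vcong nabs n m x x" using p_pos by (simp add: vcong_iff)
lemma vcong_sym: "vcong nabs n m x y \<Longrightarrow> vcong nabs n m y x" by (simp add: vcong_iff nabs_minus_commute)
lemma vcong_trans: "vcong nabs n m x y \<Longrightarrow> vcong nabs n m y z \<Longrightarrow> vcong nabs n m x z"
  unfolding vcong_iff
proof (intro allI impI)
  fix i assume "\<forall>i<n. nabs (x i - y i) \<le> p ^ m" "\<forall>i<n. nabs (y i - z i) \<le> p ^ m" "i < n"
  hence "nabs ((x i - y i) + (y i - z i)) \<le> p^m" by (intro nabs_add_le) auto
  thus "nabs (x i - z i) \<le> p^m" by simp
qed
lemma vcong_mono: "k \<le> m \<Longrightarrow> vcong nabs n m x y \<Longrightarrow> vcong nabs n k x y"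
  unfolding vcong_iff using p_power_le_iff[of m k] by (meson order_trans)
lemma vcong_SucD: "vcong nabs n (Suc m) x y \<Longrightarrow> vcong nabs n m x y"
  using vcong_mono[of m "Suc m"] by simp
lemma vcong_0: "x \<in> obox nabs n \<Longrightarrow> y \<in> obox nabs n \<Longrightarrow> vcong nabs n 0 x y"
  unfolding vcong_iff obox_iff by (auto intro: nabs_diff_le)

lemma vclass_self: "x \<in> obox nabs n \<Longrightarrow> x \<in> vclass n m x"
  by (simp add: vclass_def vcong_refl)
lemma vclass_eq_iff:
  assumes "x \<in> obox nabs n" "y \<in> obox nabs n"
  shows "vclass n m x = vclass n m y \<longleftrightarrow> vcong nabs n m x y"
proof
  assume "vclass n m x = vclass n m y"
  hence "y \<in> vclass n m x" using vclass_self assms by metis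
  thus "vcong nabs n m x y" by (simp add: vclass_def)
next
  assume h: "vcong nabs n m x y"
  show "vclass n m x = vclass n m y"
    unfolding vclass_def using h vcong_sym vcong_trans by blast
qed

lemma saturated_subset: "saturated n m S \<Longrightarrow> S \<subseteq> obox nabs n" by (simp add: saturated_def)

lemma residue_eq_iff:
  assumes "nabs x \<le> 1" "nabs y \<le> 1"
  shows "residue x = residue y \<longleftrightarrow> nabs (x - y) \<le> p"
proof
  assume h: "residue x = residue y"
  have "y \<in> residue y" using assms by (simp add: residue_def ointeg_def)
  hence "y \<in> residue x" using h by simp
  hence "nabs (x - y) < 1" by (simp add: residue_def)
  thus "nabs (x - y) \<le> p" by (rule nabs_less_1_imp_le_p)
next
  assume h: "nabs (x - y) \<le> p"
  show "residue x = residue y"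
  proof (rule set_eqI)
    fix z
    have "nabs (x - z) < 1 \<longleftrightarrow> nabs (y - z) < 1"
    proof
      assume "nabs (x - z) < 1"
      moreover have "nabs (y - z) \<le> max (nabs (y - x)) (nabs (x - z))"
        using nabs_add_le_max[of "y - x" "x - z"] by simp
      ultimately show "nabs (y - z) < 1" using h nabs_minus_commute p_less_1 by auto
    next
      assume "nabs (y - z) < 1"
      moreover have "nabs (x - z) \<le> max (nabs (x - y)) (nabs (y - z))"
        using nabs_add_le_max[of "x - y" "y - z"] by simp
      ultimately show "nabs (x - z) < 1" using h p_less_1 by auto
    qed
    thus "z \<in> residue x \<longleftrightarrow> z \<in> residue y" by (simp add: residue_def)
  qed
qed

lemma residue_nonunits: "residue ` {y. nabs y \<le> p} = {residue 0}"
proof -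
  have "residue y = residue 0" if "nabs y \<le> p" for y using residue_eq_iff[of y 0] that p_less_1 by simp
  moreover have "nabs (0::'k) \<le> p" using p_pos by simp
  ultimately show ?thesis by blast
qed

lemma card_residues_integral: "card (residue ` {y. nabs y \<le> 1}) = q" using q_eq_card_residues by (simp add: ointeg_def)

definition units :: "'k set" where "units = {y. nabs y = 1}"

lemma card_residues_units: "card (residue ` units) = q - 1"
proof -
  have "residue ` {y. nabs y \<le> 1} = residue ` units \<union> residue ` {y. nabs y \<le> p}"
    using integral_unit_or_le_p p_less_1 by (auto simp: units_def)
  moreover have "residue ` units \<inter> residue ` {y. nabs y \<le> p} = {}"
  proof (rule ccontr)
    assume "residue ` units \<inter> residue ` {y. nabs y \<le> p} \<noteq> {}"
    then obtain y where y: "nabs y = 1" "residue y = residue 0" using residue_nonunits by (auto simp: units_def)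
    hence "nabs y \<le> p" using residue_eq_iff[of y 0] by simp
    thus False using y p_less_1 by simp
  qed
  moreover have "finite (residue ` units)"
  proof (rule finite_subset[OF _ finite_residues])
    show "residue ` units \<subseteq> residue ` ointeg nabs" by (auto simp: units_def ointeg_def)
  qed
  ultimately have "q = card (residue ` units) + 1"
    using card_residues_integral residue_nonunits by (simp add: card_Un_disjoint)
  thus ?thesis by simp
qed

lemma residue_vectors_product:
  assumes "\<And>i y. i < n \<Longrightarrow> y \<in> A i \<Longrightarrow> nabs y \<le> 1"
  shows "(\<lambda>x. restrict (\<lambda>i. residue (x i)) {..<n}) ` {x\<in>obox nabs n. \<forall>i<n. x i \<in> A i}
    = PiE {..<n} (\<lambda>i. residue ` A i)"
    (is "?R ` ?S = ?P")
proof
  show "?R ` ?S \<subseteq> ?P" by auto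
next
  show "?P \<subseteq> ?R ` ?S"
  proof
    fix f assume f: "f \<in> ?P"
    define x where "x i = (if i < n then (SOME a. a \<in> A i \<and> residue a = f i) else 0)" for i
    have xi: "x i \<in> A i \<and> residue (x i) = f i" if "i < n" for i
    proof -
      have "f i \<in> residue ` A i" using f that by auto
      hence "\<exists>a. a \<in> A i \<and> residue a = f i" by (metis imageE)
      hence "(SOME a. a \<in> A i \<and> residue a = f i) \<in> A i \<and> residue (SOME a. a \<in> A i \<and> residue a = f i) = f i"
        by (rule someI_ex)
      thus ?thesis using that by (simp add: x_def)
    qed
    have "x \<in> ?S" unfolding obox_iff using xi assms by (auto simp: x_def)
    moreover have "?R x = f"
      using xi f by (auto simp: fun_eq_iff PiE_def extensional_def)
    ultimately show "f \<in> ?R ` ?S" by blast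
  qed
qed

lemma card_classes1_product:
  assumes Ao: "\<And>i y. i < n \<Longrightarrow> y \<in> A i \<Longrightarrow> nabs y \<le> 1"
  shows "card (vclass n 1 ` {x\<in>obox nabs n. \<forall>i<n. x i \<in> A i}) = (\<Prod>i<n. card (residue ` A i))
     \<and> finite (vclass n 1 ` {x\<in>obox nabs n. \<forall>i<n. x i \<in> A i})"
proof -
  define S where "S = {x\<in>obox nabs n. \<forall>i<n. x i \<in> A i}"
  define R where "R x = restrict (\<lambda>i. residue (x i)) {..<n}" for x
  have RS: "R ` S = PiE {..<n} (\<lambda>i. residue ` A i)"
    unfolding R_def S_def by (rule residue_vectors_product[OF Ao])
  have "vclass n 1 x = vclass n 1 y \<longleftrightarrow> R x = R y" if "x \<in> S" "y \<in> S" for x y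
  proof -
    have xo: "x \<in> obox nabs n" "y \<in> obox nabs n" using that S_def by auto
    have "vclass n 1 x = vclass n 1 y \<longleftrightarrow> (\<forall>i<n. nabs (x i - y i) \<le> p)"
      using vclass_eq_iff[OF xo] by (simp add: vcong_iff)
    also have "\<dots> \<longleftrightarrow> (\<forall>i<n. residue (x i) = residue (y i))"
      using residue_eq_iff xo by (auto simp: obox_iff)
    also have "\<dots> \<longleftrightarrow> R x = R y"
      unfolding R_def restrict_def by (auto simp: fun_eq_iff)
    finally show ?thesis .
  qed
  hence "card (vclass n 1 ` S) = card (R ` S) \<and> (finite (vclass n 1 ` S) \<longleftrightarrow> finite (R ` S))"
    by (rule card_image_eq_same_kernel)
  moreover have "finite (residue ` A i)" if "i < n" for i
  proof (rule finite_subset[OF _ finite_residues])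
    show "residue ` A i \<subseteq> residue ` ointeg nabs" using Ao that by (auto simp: ointeg_def)
  qed
  hence "finite (PiE {..<n} (\<lambda>i. residue ` A i))" by (intro finite_PiE) auto
  ultimately show ?thesis unfolding S_def[symmetric] RS by (simp add: card_PiE)
qed

lemma card_classes1_obox: "card (vclass n 1 ` obox nabs n) = q^n \<and> finite (vclass n 1 ` obox nabs n)"
proof -
  have "obox nabs n = {x\<in>obox nabs n. \<forall>i<n. x i \<in> ointeg nabs}"
    by (auto simp: obox_iff ointeg_def)
  moreover have "(\<Prod>i<n. card (residue ` ointeg nabs)) = q^n" by (simp add: q_eq_card_residues)
  ultimately show ?thesis using card_classes1_product[of n "\<lambda>_. ointeg nabs"] by (simp add: ointeg_def)
qed

lemma subclasses_eq_image:
  assumes x: "x \<in> obox nabs n"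
  shows "vclass n (Suc m) ` vclass n m x = (\<lambda>d. vclass n (Suc m) (\<lambda>i. x i + 2^m * d i)) ` obox nabs n"
proof
  show "vclass n (Suc m) ` vclass n m x \<subseteq> (\<lambda>d. vclass n (Suc m) (\<lambda>i. x i + 2^m * d i)) ` obox nabs n"
  proof
    fix X assume "X \<in> vclass n (Suc m) ` vclass n m x"
    then obtain y where y: "y \<in> vclass n m x" "X = vclass n (Suc m) y" by blast
    define d where "d i = (y i - x i) / 2^m" for i
    have yo: "y \<in> obox nabs n" "vcong nabs n m x y" using y by (auto simp: vclass_def)
    have "d \<in> obox nabs n" unfolding obox_iff
    proof (intro conjI allI impI)
      fix i assume "i < n"
      hence "nabs (y i - x i) \<le> p^m" using yo(2) nabs_minus_commute by (simp add: vcong_iff)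
      thus "nabs (d i) \<le> 1" using p_pos by (simp add: d_def nabs_divide nabs_two divide_le_eq)
    next
      fix i assume "n \<le> i" thus "d i = 0" using x yo by (simp add: d_def obox_iff)
    qed
    moreover have "(\<lambda>i. x i + 2^m * d i) = y" using two_nonzero by (simp add: d_def)
    ultimately show "X \<in> (\<lambda>d. vclass n (Suc m) (\<lambda>i. x i + 2^m * d i)) ` obox nabs n"
      using y by auto
  qed
next
  have "(\<lambda>i. x i + 2^m * d i) \<in> vclass n m x" if "d \<in> obox nabs n" for d
    unfolding vclass_def vcong_iff obox_iff using x that p_pos
    by (auto simp: obox_iff nabs_mult nabs_two intro!: nabs_add_le integral_intros mult_left_le)
  thus "(\<lambda>d. vclass n (Suc m) (\<lambda>i. x i + 2^m * d i)) ` obox nabs n \<subseteq> vclass n (Suc m) ` vclass n m x"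
    by auto
qed

lemma card_subclasses:
  assumes x: "x \<in> obox nabs n"
  shows "card (vclass n (Suc m) ` vclass n m x) = q^n \<and> finite (vclass n (Suc m) ` vclass n m x)"
proof -
  define g where "g d = vclass n (Suc m) (\<lambda>i. x i + 2^m * d i)" for d
  have "g d = g d' \<longleftrightarrow> vclass n 1 d = vclass n 1 d'" if "d \<in> obox nabs n" "d' \<in> obox nabs n" for d d'
  proof -
    have o1: "(\<lambda>i. x i + 2^m * d i) \<in> obox nabs n" "(\<lambda>i. x i + 2^m * d' i) \<in> obox nabs n"
      using x that p_pos
      by (auto simp: obox_iff nabs_mult nabs_two intro!: nabs_add_le integral_intros mult_left_le)
    have "g d = g d' \<longleftrightarrow> (\<forall>i<n. nabs (2^m * (d i - d' i)) \<le> p^(Suc m))"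
      unfolding g_def vclass_eq_iff[OF o1] vcong_iff by (simp add: algebra_simps)
    also have "\<dots> \<longleftrightarrow> (\<forall>i<n. nabs (d i - d' i) \<le> p)"
      using p_pos by (simp add: nabs_mult nabs_two mult.commute[of p])
    also have "\<dots> \<longleftrightarrow> vclass n 1 d = vclass n 1 d'"
      using vclass_eq_iff[OF that] by (simp add: vcong_iff)
    finally show ?thesis .
  qed
  hence "card (g ` obox nabs n) = card (vclass n 1 ` obox nabs n) \<and>
      (finite (g ` obox nabs n) \<longleftrightarrow> finite (vclass n 1 ` obox nabs n))"
    by (rule card_image_eq_same_kernel)
  thus ?thesis using card_classes1_obox subclasses_eq_image[OF x, of m] by (simp add: g_def)
qed

definition coarsen :: "nat \<Rightarrow> nat \<Rightarrow> (nat \<Rightarrow> 'k) set \<Rightarrow> (nat \<Rightarrow> 'k) set" where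
  "coarsen n m X = {z \<in> obox nabs n. \<exists>w\<in>X. vcong nabs n m w z}"

lemma coarsen_vclass:
  assumes "y \<in> obox nabs n"
  shows "coarsen n m (vclass n (Suc m) y) = vclass n m y"
  unfolding coarsen_def vclass_def using assms vcong_refl vcong_SucD vcong_trans vcong_sym by blast

lemma coarsen_fibre:
  assumes S: "S \<subseteq> obox nabs n" and x: "x \<in> S"
  shows "{X \<in> vclass n (Suc m) ` S. coarsen n m X = vclass n m x}
    = vclass n (Suc m) ` {y\<in>S. y \<in> vclass n m x}"
proof -
  have "coarsen n m (vclass n (Suc m) y) = vclass n m x \<longleftrightarrow> y \<in> vclass n m x" if "y \<in> S" for y
  proof -
    have yo: "y \<in> obox nabs n" "x \<in> obox nabs n" using S that x by auto
    show ?thesis using coarsen_vclass[OF yo(1)] vclass_eq_iff[OF yo(2) yo(1)] yo by (auto simp: vclass_def)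
  qed
  thus ?thesis by auto
qed

lemma coarsen_image: "S \<subseteq> obox nabs n \<Longrightarrow> coarsen n m ` (vclass n (Suc m) ` S) \<subseteq> vclass n m ` S"
  using coarsen_vclass by auto

lemma card_classes_Suc_le:
  assumes S: "S \<subseteq> obox nabs n" and fin: "finite (vclass n m ` S)"
  shows "card (vclass n (Suc m) ` S) \<le> q^n * card (vclass n m ` S) \<and> finite (vclass n (Suc m) ` S)"
proof (rule card_le_by_fibres[OF fin coarsen_image[OF S]])
  fix b assume "b \<in> vclass n m ` S"
  then obtain x where x: "x \<in> S" "b = vclass n m x" by blast
  have fin_card: "finite (vclass n (Suc m) ` vclass n m x)" "card (vclass n (Suc m) ` vclass n m x) = q^n"
    using card_subclasses x S by auto
  have fibre_sub: "{a \<in> vclass n (Suc m) ` S. coarsen n m a = b} \<subseteq> vclass n (Suc m) ` vclass n m x"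
    unfolding x(2) coarsen_fibre[OF S x(1)] by auto
  show "finite {a \<in> vclass n (Suc m) ` S. coarsen n m a = b}"
    using finite_subset[OF fibre_sub fin_card(1)] .
  show "card {a \<in> vclass n (Suc m) ` S. coarsen n m a = b} \<le> q^n"
    using card_mono[OF fin_card(1) fibre_sub] fin_card(2) by simp
qed

lemma card_classes_Suc:
  assumes sat: "saturated n m S" and fin: "finite (vclass n m ` S)"
  shows "card (vclass n (Suc m) ` S) = q^n * card (vclass n m ` S)"
proof -
  have S: "S \<subseteq> obox nabs n" using sat by (simp add: saturated_def)
  show ?thesis
  proof (rule card_by_fibres[OF fin coarsen_image[OF S], THEN conjunct1])
    fix b assume "b \<in> vclass n m ` S"
    then obtain x where x: "x \<in> S" "b = vclass n m x" by blast
    have "{y\<in>S. y \<in> vclass n m x} = vclass n m x"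
      using sat x(1) by (auto simp: saturated_def vclass_def)
    hence "{a \<in> vclass n (Suc m) ` S. coarsen n m a = b} = vclass n (Suc m) ` vclass n m x"
      using coarsen_fibre[OF S x(1)] x(2) by simp
    thus "finite {a \<in> vclass n (Suc m) ` S. coarsen n m a = b}"
      and "card {a \<in> vclass n (Suc m) ` S. coarsen n m a = b} = q^n"
      using card_subclasses x S by auto
  qed
qed

lemma saturated_obox: "saturated n m (obox nabs n)" by (simp add: saturated_def)
lemma saturated_mono: "saturated n m S \<Longrightarrow> m \<le> m' \<Longrightarrow> saturated n m' S"
  unfolding saturated_def using vcong_mono by blast

lemma saturated_Int: "saturated n m A \<Longrightarrow> saturated n m B \<Longrightarrow> saturated n m (A \<inter> B)"
  unfolding saturated_def by blast

lemma vclass_0: "x \<in> obox nabs n \<Longrightarrow> vclass n 0 x = obox nabs n"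
  unfolding vclass_def using vcong_0 by auto

lemma zero_in_obox: "(\<lambda>i. 0) \<in> obox nabs n" by (simp add: obox_iff)

lemma card_classes_obox: "card (vclass n m ` obox nabs n) = q^(n*m) \<and> finite (vclass n m ` obox nabs n)"
proof (induction m)
  case 0
  have "vclass n 0 ` obox nabs n = {obox nabs n}" using vclass_0 zero_in_obox by blast
  thus ?case by simp
next
  case (Suc m)
  have "card (vclass n (Suc m) ` obox nabs n) = q^n * card (vclass n m ` obox nabs n)"
    using card_classes_Suc[OF saturated_obox Suc[THEN conjunct2]] by simp
  moreover have "finite (vclass n (Suc m) ` obox nabs n)"
    using card_classes_Suc_le[OF _ Suc[THEN conjunct2]] by simp
  ultimately show ?case using Suc by (simp add: power_add mult.commute power_mult)
qed

lemma finite_classes: "S \<subseteq> obox nabs n \<Longrightarrow> finite (vclass n m ` S)"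
  using card_classes_obox finite_subset image_mono by metis

lemma nclasses_obox: "nclasses n m (obox nabs n) = q^(n*m)" using card_classes_obox by (simp add: nclasses_def)

lemma nclasses_Suc_le: "S \<subseteq> obox nabs n \<Longrightarrow> nclasses n (Suc m) S \<le> q^n * nclasses n m S"
  using card_classes_Suc_le[OF _ finite_classes] by (simp add: nclasses_def)
lemma nclasses_Suc: "saturated n m S \<Longrightarrow> nclasses n (Suc m) S = q^n * nclasses n m S"
  using card_classes_Suc[OF _ finite_classes] saturated_subset by (simp add: nclasses_def)

lemma nclasses_add: "saturated n m S \<Longrightarrow> nclasses n (m+k) S = q^(n*k) * nclasses n m S"
proof (induction k)
  case 0 thus ?case by simp
next
  case (Suc k)
  have "saturated n (m+k) S" using saturated_mono Suc by simp
  thus ?case using nclasses_Suc[of n "m+k" S] Suc by (simp add: power_add power_mult mult.commute)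
qed

lemma nclasses_add_le: "S \<subseteq> obox nabs n \<Longrightarrow> nclasses n (m+k) S \<le> q^(n*k) * nclasses n m S"
proof (induction k)
  case 0 thus ?case by simp
next
  case (Suc k)
  have "nclasses n (m + Suc k) S \<le> q^n * nclasses n (m+k) S" using nclasses_Suc_le[OF Suc.prems] by simp
  also have "\<dots> \<le> q^n * (q^(n*k) * nclasses n m S)" using Suc by simp
  finally show ?case by (simp add: power_add power_mult mult.commute mult.left_commute)
qed

lemma haar_meas_saturated:
  assumes P: "saturated n M S"
  shows "haar_meas nabs n S = real (nclasses n M S) / real q^(n*M)"
proof -
  define g where "g m = real (nclasses n m S) / real q^(n*m)" for m
  have hq: "real q > 0" using q_ge_2 by simp
  have ge: "g M \<le> g m" for m
  proof (cases "m \<le> M")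
    case True
    then obtain k where k: "M = m + k" using le_Suc_ex by blast
    have "nclasses n M S \<le> q^(n*k) * nclasses n m S" using nclasses_add_le P saturated_subset k by blast
    hence "real (nclasses n M S) \<le> real q^(n*k) * real (nclasses n m S)"
      by (metis of_nat_le_iff of_nat_mult of_nat_power)
    hence "real (nclasses n M S) / real q^(n*M) \<le> real q^(n*k) * real (nclasses n m S) / real q^(n*M)"
      using hq by (simp add: divide_right_mono)
    also have "\<dots> = real (nclasses n m S) / real q^(n*m)" using hq k by (simp add: power_add field_simps)
    finally show ?thesis by (simp add: g_def)
  next
    case False
    then obtain k where k: "m = M + k" using le_Suc_ex nat_le_linear by blast
    have "nclasses n m S = q^(n*k) * nclasses n M S" using nclasses_add P k by blast
    hence "g m = g M" using hq k by (simp add: g_def power_add field_simps)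
    thus ?thesis by simp
  qed
  have "haar_meas nabs n S = Inf (range g)" unfolding haar_meas_def g_def nclasses_def vclass_def by simp
  also have "\<dots> = g M" by (rule cInf_eq_minimum) (auto simp: ge)
  finally show ?thesis by (simp add: g_def)
qed

lemma nabs_double_diff_le_iff: "nabs (2*a - 2*b) \<le> p^(Suc m) \<longleftrightarrow> nabs (a - b) \<le> p^m"
proof -
  have "2*a - 2*b = 2*(a-b)" by (simp add: algebra_simps)
  hence "nabs (2*a - 2*b) = p * nabs (a - b)" using nabs_mult[of 2 "a-b"] by (simp add: nabs_two)
  thus ?thesis using p_pos by simp
qed

definition double :: "(nat \<Rightarrow> 'k) \<Rightarrow> (nat \<Rightarrow> 'k)" where "double x = (\<lambda>i. 2 * x i)"

lemma double_in_obox: "x \<in> obox nabs n \<Longrightarrow> double x \<in> obox nabs n"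
  by (auto simp: double_def obox_iff intro: integral_intros nabs_numeral_le_1)

lemma nclasses_double:
  assumes S: "S \<subseteq> obox nabs n"
  shows "nclasses n (Suc m) (double ` S) = nclasses n m S"
proof -
  have "vclass n (Suc m) ` double ` S = (vclass n (Suc m) \<circ> double) ` S" by (simp add: image_comp)
  moreover have "card ((vclass n (Suc m) \<circ> double) ` S) = card (vclass n m ` S)"
  proof (rule card_image_eq_same_kernel[THEN conjunct1])
    fix x y assume xy: "x \<in> S" "y \<in> S"
    hence o: "x \<in> obox nabs n" "y \<in> obox nabs n" using S by auto
    have "(vclass n (Suc m) \<circ> double) x = (vclass n (Suc m) \<circ> double) y \<longleftrightarrow> vcong nabs n (Suc m) (double x) (double y)"
      using vclass_eq_iff double_in_obox o by simp
    also have "\<dots> \<longleftrightarrow> vcong nabs n m x y" unfolding vcong_iff double_def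
      using nabs_double_diff_le_iff by simp
    also have "\<dots> \<longleftrightarrow> vclass n m x = vclass n m y" using vclass_eq_iff o by simp
    finally show "(vclass n (Suc m) \<circ> double) x = (vclass n (Suc m) \<circ> double) y \<longleftrightarrow> vclass n m x = vclass n m y" .
  qed
  ultimately show ?thesis by (simp add: nclasses_def)
qed

lemma nclasses_image:
  assumes S: "S \<subseteq> obox nabs n" and \<phi>: "\<And>x. x \<in> obox nabs n \<Longrightarrow> \<phi> x \<in> obox nabs n"
    and pres: "\<And>x y. x \<in> obox nabs n \<Longrightarrow> y \<in> obox nabs n \<Longrightarrow> vcong nabs n m (\<phi> x) (\<phi> y) \<longleftrightarrow> vcong nabs n m x y"
  shows "nclasses n m (\<phi> ` S) = nclasses n m S"
proof -
  have "vclass n m ` \<phi> ` S = (vclass n m \<circ> \<phi>) ` S" by (simp add: image_comp)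
  moreover have "card ((vclass n m \<circ> \<phi>) ` S) = card (vclass n m ` S)"
  proof (rule card_image_eq_same_kernel[THEN conjunct1])
    fix x y assume xy: "x \<in> S" "y \<in> S"
    hence o: "x \<in> obox nabs n" "y \<in> obox nabs n" using S by auto
    show "(vclass n m \<circ> \<phi>) x = (vclass n m \<circ> \<phi>) y \<longleftrightarrow> vclass n m x = vclass n m y"
      using vclass_eq_iff[OF \<phi>[OF o(1)] \<phi>[OF o(2)]] vclass_eq_iff[OF o] pres[OF o] by simp
  qed
  ultimately show ?thesis by (simp add: nclasses_def)
qed

lemma nclasses_Un:
  assumes "saturated n m S" "saturated n m T" "S \<inter> T = {}"
  shows "nclasses n m (S \<union> T) = nclasses n m S + nclasses n m T"
proof -
  have d: "vclass n m ` S \<inter> vclass n m ` T = {}"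
  proof (rule ccontr)
    assume "vclass n m ` S \<inter> vclass n m ` T \<noteq> {}"
    then obtain x y where xy: "x \<in> S" "y \<in> T" "vclass n m x = vclass n m y" by blast
    hence o: "x \<in> obox nabs n" "y \<in> obox nabs n" using assms saturated_subset by blast+
    hence "vcong nabs n m x y" using vclass_eq_iff xy by blast
    hence "y \<in> S" using assms(1) xy o unfolding saturated_def by blast
    thus False using xy assms(3) by blast
  qed
  have f: "finite (vclass n m ` S)" "finite (vclass n m ` T)"
    using finite_classes saturated_subset assms by blast+
  show ?thesis unfolding nclasses_def image_Un using card_Un_disjoint[OF f d] by simp
qed

definition double_obox :: "nat \<Rightarrow> (nat \<Rightarrow> 'k) set" where
  "double_obox n = {x \<in> obox nabs n. \<forall>i<n. nabs (x i) \<le> p}"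

lemma double_obox_eq_image: "double_obox n = double ` obox nabs n"
proof
  show "double_obox n \<subseteq> double ` obox nabs n"
  proof
    fix v assume v: "v \<in> double_obox n"
    define w where "w = (\<lambda>i. v i / 2)"
    have "w \<in> obox nabs n" using v nabs_half_le_1 by (auto simp: double_obox_def w_def obox_iff)
    moreover have "double w = v" using two_nonzero by (simp add: double_def w_def)
    ultimately show "v \<in> double ` obox nabs n" by (metis imageI)
  qed
next
  show "double ` obox nabs n \<subseteq> double_obox n"
  proof
    fix v assume "v \<in> double ` obox nabs n"
    then obtain w where w: "w \<in> obox nabs n" "v = double w" by blast
    have "nabs (2 * w i) \<le> p" if "i < n" for i using w that by (intro nabs_two_mult_le) (simp add: obox_iff)
    thus "v \<in> double_obox n" using double_in_obox[OF w(1)] w by (simp add: double_obox_def double_def)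
  qed
qed

lemma saturated_double_obox: "saturated n 1 (double_obox n)"
  unfolding saturated_def
proof (intro conjI ballI impI)
  show "double_obox n \<subseteq> obox nabs n" by (auto simp: double_obox_def)
  fix x y assume x: "x \<in> double_obox n" and y: "y \<in> obox nabs n" and v: "vcong nabs n 1 x y"
  have "nabs (y i) \<le> p" if "i < n" for i
  proof -
    have "nabs ((y i - x i) + x i) \<le> p"
      using v x that by (intro nabs_add_le) (auto simp: vcong_iff nabs_minus_commute double_obox_def)
    thus ?thesis by simp
  qed
  thus "y \<in> double_obox n" using y by (simp add: double_obox_def)
qed

lemma nclasses_double_obox: "nclasses n (Suc m) (double_obox n) = q^(n*m)"
  unfolding double_obox_eq_image using nclasses_double[of "obox nabs n"] nclasses_obox by simp

definition units1 :: "(nat \<Rightarrow> 'k) set" where "units1 = {v \<in> obox nabs 1. nabs (v 0) = 1}"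

lemma saturated_units1: "saturated 1 1 units1"
  unfolding saturated_def
proof (intro conjI ballI impI)
  show "units1 \<subseteq> obox nabs 1" by (auto simp: units1_def)
  fix x y assume x: "x \<in> units1" and y: "y \<in> obox nabs 1" and v: "vcong nabs 1 1 x y"
  have "nabs (y 0 - x 0) \<le> p" using v by (simp add: vcong_iff nabs_minus_commute)
  hence "nabs (y 0 - x 0 + x 0) = 1"
    using nabs_add_dominant[of "y 0 - x 0" "x 0"] x p_less_1 by (simp add: units1_def add.commute)
  thus "y \<in> units1" using y by (simp add: units1_def)
qed

lemma nclasses_units1: "nclasses 1 (Suc l) units1 = q^(Suc l) - q^l"
proof -
  have "obox nabs 1 = units1 \<union> double_obox 1"
    using integral_unit_or_le_p by (fastforce simp: units1_def double_obox_def obox_iff)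
  moreover have "units1 \<inter> double_obox 1 = {}"
    unfolding units1_def double_obox_def using p_less_1 by auto
  moreover have "saturated 1 (Suc l) units1" "saturated 1 (Suc l) (double_obox 1)"
    using saturated_mono[OF saturated_units1] saturated_mono[OF saturated_double_obox] by auto
  ultimately have "nclasses 1 (Suc l) (obox nabs 1) = nclasses 1 (Suc l) units1 + nclasses 1 (Suc l) (double_obox 1)"
    using nclasses_Un by metis
  thus ?thesis using nclasses_obox[of 1 "Suc l"] nclasses_double_obox[of 1 l] by simp
qed

definition vec1 :: "'k \<Rightarrow> nat \<Rightarrow> 'k" where "vec1 c = (\<lambda>i. if i = 0 then c else 0)"

lemma vec1_in_obox_iff: "vec1 c \<in> obox nabs 1 \<longleftrightarrow> nabs c \<le> 1" by (auto simp: vec1_def obox_iff)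
lemma vcong_vec1_iff: "vcong nabs 1 k (vec1 c) (vec1 c') \<longleftrightarrow> nabs (c - c') \<le> p^k" by (simp add: vec1_def vcong_iff)
lemma vec1_eta: "t \<in> obox nabs 1 \<Longrightarrow> t = vec1 (t 0)" by (auto simp: vec1_def obox_iff fun_eq_iff)

lemma vclass_vec1_representative:
  assumes S: "S \<subseteq> obox nabs n" and gS: "\<And>x. x \<in> S \<Longrightarrow> nabs (g x) \<le> 1"
    and compat: "\<And>x y. x \<in> S \<Longrightarrow> y \<in> S \<Longrightarrow> vcong nabs n m x y \<Longrightarrow> nabs (g x - g y) \<le> p^k"
    and x: "x \<in> S"
  shows "vclass 1 k (vec1 (g (SOME y. y \<in> S \<and> vclass n m y = vclass n m x))) = vclass 1 k (vec1 (g x))"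
proof -
  have "\<exists>y. y \<in> S \<and> vclass n m y = vclass n m x" using x by blast
  then obtain y where y: "y \<in> S" "vclass n m y = vclass n m x"
    and some: "(SOME y. y \<in> S \<and> vclass n m y = vclass n m x) = y"
    by (metis (mono_tags, lifting) someI_ex)
  have "vcong nabs n m y x" using vclass_eq_iff y S x by blast
  hence "vcong nabs 1 k (vec1 (g y)) (vec1 (g x))" using compat y x vcong_vec1_iff by simp
  moreover have "vec1 (g y) \<in> obox nabs 1" "vec1 (g x) \<in> obox nabs 1"
    using vec1_in_obox_iff gS y x by auto
  ultimately show ?thesis using vclass_eq_iff some by simp
qed

lemma nclasses_by_fibres:
  assumes S: "S \<subseteq> obox nabs n" and T: "T \<subseteq> obox nabs 1"
    and g: "\<And>x. x \<in> S \<Longrightarrow> vec1 (g x) \<in> T"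
    and compat: "\<And>x y. x \<in> S \<Longrightarrow> y \<in> S \<Longrightarrow> vcong nabs n m x y \<Longrightarrow> nabs (g x - g y) \<le> p^k"
    and N: "\<And>c. vec1 c \<in> T \<Longrightarrow> nclasses n m {x\<in>S. nabs (g x - c) \<le> p^k} = N"
  shows "nclasses n m S = N * nclasses 1 k T"
proof -
  define f where "f X = vclass 1 k (vec1 (g (SOME y. y \<in> S \<and> vclass n m y = X)))" for X
  have gS: "nabs (g x) \<le> 1" if "x \<in> S" for x using g[OF that] T vec1_in_obox_iff by blast
  have fx: "f (vclass n m x) = vclass 1 k (vec1 (g x))" if x: "x \<in> S" for x
    unfolding f_def by (rule vclass_vec1_representative[where g = g]) (use S gS compat x in auto)
  have mapsto: "f ` (vclass n m ` S) \<subseteq> vclass 1 k ` T" using fx g by auto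
  have main: "card (vclass n m ` S) = N * card (vclass 1 k ` T) \<and> finite (vclass n m ` S)"
  proof (rule card_by_fibres[OF finite_classes[OF T] mapsto])
    fix b assume "b \<in> vclass 1 k ` T"
    then obtain t where t: "t \<in> T" "b = vclass 1 k t" by blast
    have te: "t = vec1 (t 0)" using vec1_eta T t by blast
    have t0: "nabs (t 0) \<le> 1" using T t te vec1_in_obox_iff by (metis subsetD)
    have fib: "{X \<in> vclass n m ` S. f X = b} = vclass n m ` {x\<in>S. nabs (g x - t 0) \<le> p^k}"
    proof -
      have "f (vclass n m x) = b \<longleftrightarrow> nabs (g x - t 0) \<le> p^k" if "x \<in> S" for x
      proof -
        have o: "vec1 (g x) \<in> obox nabs 1" "vec1 (t 0) \<in> obox nabs 1"
          using vec1_in_obox_iff gS[OF that] t0 by auto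
        have "f (vclass n m x) = b \<longleftrightarrow> vclass 1 k (vec1 (g x)) = vclass 1 k (vec1 (t 0))"
          using fx[OF that] t te by simp
        also have "\<dots> \<longleftrightarrow> nabs (g x - t 0) \<le> p^k"
          using vclass_eq_iff[OF o] vcong_vec1_iff by simp
        finally show ?thesis .
      qed
      thus ?thesis by auto
    qed
    show "finite {X \<in> vclass n m ` S. f X = b}" unfolding fib by (rule finite_classes) (use S in auto)
    show "card {X \<in> vclass n m ` S. f X = b} = N" unfolding fib
      using N[of "t 0"] te t by (simp add: nclasses_def)
  qed
  thus ?thesis by (simp add: nclasses_def)
qed

lemma residue_square_eq_iff:
  assumes s: "nabs s \<le> 1" and t: "nabs t \<le> 1"
  shows "residue (s^2) = residue (t^2) \<longleftrightarrow> residue s = residue t"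
proof -
  have "nabs (s^2 - t^2) \<le> p \<longleftrightarrow> nabs (s - t) \<le> p"
  proof
    assume h: "nabs (s^2 - t^2) \<le> p"
    have "(s-t)^2 = (s^2 - t^2) - 2*(t*(s - t))" by (simp add: algebra_simps power2_eq_square)
    moreover have "nabs (2*(t*(s-t))) \<le> p" using s t by (intro nabs_two_mult_le integral_intros) auto
    ultimately have "nabs ((s-t)^2) \<le> p" using h nabs_diff_le by simp
    thus "nabs (s - t) \<le> p" using nabs_le_p_if_square_le_p s t by (meson integral_intros(3))
  next
    assume h: "nabs (s - t) \<le> p"
    have "s^2 - t^2 = (s - t) * (s + t)" by (simp add: algebra_simps power2_eq_square)
    moreover have "nabs (s + t) \<le> 1" using s t by (intro integral_intros)
    ultimately show "nabs (s^2 - t^2) \<le> p" using nabs_mult_le_integral h by simp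
  qed
  thus ?thesis using residue_eq_iff s t by (simp add: power_le_one)
qed

text \<open>Squaring is injective, hence bijective, on the finite residue field.\<close>

lemma square_root_mod_2:
  assumes c: "nabs c \<le> 1"
  shows "\<exists>s. nabs s \<le> 1 \<and> nabs (s^2 - c) \<le> p"
proof -
  have "card ((\<lambda>s. residue (s^2)) ` ointeg nabs) = card (residue ` ointeg nabs) \<and>
      (finite ((\<lambda>s. residue (s^2)) ` ointeg nabs) \<longleftrightarrow> finite (residue ` ointeg nabs))"
    by (rule card_image_eq_same_kernel) (simp add: ointeg_def residue_square_eq_iff)
  moreover have "(\<lambda>s. residue (s^2)) ` ointeg nabs \<subseteq> residue ` ointeg nabs"
    by (auto simp: ointeg_def power_le_one)
  ultimately have "(\<lambda>s. residue (s^2)) ` ointeg nabs = residue ` ointeg nabs"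
    using finite_residues card_subset_eq by metis
  moreover have "residue c \<in> residue ` ointeg nabs" using c by (simp add: ointeg_def)
  ultimately obtain s where s: "nabs s \<le> 1" "residue (s^2) = residue c"
    unfolding ointeg_def by (metis (no_types, lifting) imageE mem_Collect_eq)
  hence "nabs (s^2 - c) \<le> p" using residue_eq_iff[of "s^2" c] c by (simp add: power_le_one)
  thus ?thesis using s(1) by blast
qed

end

section \<open>The quaternion norm form\<close>

text \<open>With x_3 = 2t - x_0 - x_1 - x_2, the cross term of the norm form is, modulo 2, the binary
  form u P^2 + P R + u R^2 in P = x_0 - x_2, R = x_1 - x_2.\<close>

lemma cross_terms_identity:
  fixes x0 x1 x2 t u :: "'a::comm_ring_1"
  defines "x3 \<equiv> 2*t - x0 - x1 - x2"
  shows "x0*x1+x0*x2+x0*x3+x1*x2+x1*x3+x2*x3 + (1+u)*(x2^2+x3^2)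
    = u*(x0-x2)^2 + (x0-x2)*(x1-x2) + u*(x1-x2)^2 + 2*(
      u*x0*x1 + 2*u*x0*x2 + 2*u*x1*x2 + x0*x2 + x1*x2 + 2*t^2 + 2*t^2*u - 2*t*u*x0 - 2*t*u*x1 - 2*t*u*x2 - t*x0 - t*x1 - t*x2)"
  unfolding x3_def by (simp add: algebra_simps power2_eq_square)

text \<open>For x_i = x_0 + 2 d_i the norm is 4 (D^2 + D x_0 - u x_0^2) modulo 8, where D = d_1 + d_2 + d_3.\<close>

lemma nform_near_diagonal_identity:
  fixes x0 d1 d2 d3 u :: "'a::comm_ring_1"
  shows "x0^2 + (x0+2*d1)^2 - (1+2*u)*((x0+2*d2)^2 + (x0+2*d3)^2)
    = 4*(((d1+d2+d3)^2 + (d1+d2+d3)*x0 - u*x0^2) + 2*(0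
      -d1*d2 - d1*d3 - d2*d3 - d2*u*x0 - d2*x0 - d2^2 - d2^2*u - d3*u*x0 - d3*x0 - d3^2 - d3^2*u))"
  by (simp add: algebra_simps power2_eq_square)

locale quaternion_norm_form = unram_2adic_field nabs for nabs :: "'k::field \<Rightarrow> real" +
  fixes u :: 'k
  assumes u: "nabs u = 1"
    and hil: "hilbert_symbol (1 + 2*u) (-1) = -1"
begin

definition a :: 'k where "a = 1 + 2*u"

text \<open>This is where (a,-1) = -1 enters: by Hensel a root of y^2 + y = u modulo 2 lifts to a root,
  and then (2y + 2)^2 = a 2^2 - (2y)^2.\<close>

lemma no_root_mod_2:
  assumes "nabs r \<le> 1"
  shows "nabs (r^2 + r - u) = 1"
proof (rule ccontr)
  assume ne: "nabs (r^2 + r - u) \<noteq> 1"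
  have "nabs (r^2 + r - u) \<le> 1" using assms u
    by (intro nabs_diff_le nabs_add_le) (auto simp: power_le_one)
  hence c: "nabs (r^2 + r - u) < 1" using ne by simp
  have "nabs (2*r) \<le> p" using assms p_pos by (simp add: nabs_mult nabs_two mult_left_le)
  hence "nabs (1 + 2*r) = 1" using nabs_add_dominant[of "2*r" 1] p_less_1 by simp
  then obtain e where e: "(1+2*r)*e + (r^2+r-u) + e^2 = 0" using hensel_quadratic c by blast
  define y where "y = r + e"
  have yy: "y^2 + y = u" using e unfolding y_def by (simp add: algebra_simps power2_eq_square)
  define X where "X = 1 + 2*y"
  have "(X+1)^2 = (1+2*u) * 2^2 + (-1) * (X-1)^2"
    unfolding X_def using yy[symmetric] by (simp add: algebra_simps power2_eq_square)
  hence "hilbert_symbol (1 + 2*u) (-1) = 1" unfolding hilbert_symbol_def using two_nonzero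
    by (metis (no_types, lifting) prod.inject)
  thus False using hil by simp
qed

definition nform :: "(nat \<Rightarrow> 'k) \<Rightarrow> 'k" where
  "nform x = x 0^2 + x 1^2 - a*(x 2^2 + x 3^2)"

lemma u_nonzero: "u \<noteq> 0" using u by auto

lemma binary_form_unit:
  assumes R: "nabs R = 1" and P: "nabs P \<le> 1"
  shows "nabs (u*P^2 + P*R + u*R^2) = 1"
proof -
  have R0: "R \<noteq> 0" using R by auto
  define y where "y = u*P/R"
  have y1: "nabs y \<le> 1" using P u R by (simp add: y_def nabs_divide nabs_mult)
  have id: "u*P^2 + P*R + u*R^2 = (R^2/u) * (y^2+y+u^2)"
    using R0 u_nonzero by (simp add: y_def field_simps power2_eq_square)
  have id2: "(y+u)^2 + (y+u) - u = (y^2+y+u^2) + 2*(y*u)"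
    by (simp add: algebra_simps power2_eq_square)
  have "nabs ((y+u)^2 + (y+u) - u) = 1" using no_root_mod_2[of "y+u"] y1 u by (simp add: nabs_add_le)
  moreover have "nabs (2*(y*u)) \<le> p" using y1 u by (intro nabs_two_mult_le) (simp add: nabs_mult)
  moreover have A1: "nabs (y^2+y+u^2) \<le> 1" using y1 u by (intro integral_intros) auto
  ultimately have "nabs (y^2+y+u^2) = 1"
  proof -
    assume h1: "nabs ((y+u)^2 + (y+u) - u) = 1" and h2: "nabs (2*(y*u)) \<le> p"
    have "\<not> nabs (y^2+y+u^2) \<le> p"
    proof
      assume "nabs (y^2+y+u^2) \<le> p"
      hence "nabs ((y^2+y+u^2) + 2*(y*u)) \<le> p" using h2 nabs_add_le by blast
      thus False using h1 id2 p_less_1 by simp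
    qed
    thus ?thesis using integral_unit_or_le_p A1 by blast
  qed
  thus ?thesis using id R u by (simp add: nabs_mult nabs_divide)
qed

lemma binary_form_anisotropic:
  assumes "nabs P \<le> 1" "nabs R \<le> 1" "nabs (u*P^2 + P*R + u*R^2) \<le> p"
  shows "nabs P \<le> p \<and> nabs R \<le> p"
proof -
  have "nabs R \<noteq> 1" using binary_form_unit[of R P] assms p_less_1 by auto
  moreover have "nabs P \<noteq> 1" using binary_form_unit[of P R] assms p_less_1 by (auto simp: algebra_simps)
  ultimately show ?thesis using integral_unit_or_le_p assms by blast
qed

lemma nform_integral: "\<forall>i<4. nabs (x i) \<le> 1 \<Longrightarrow> nabs (nform x) \<le> 1"
  unfolding nform_def a_def using u by (intro integral_intros) auto

definition cross_term :: "(nat \<Rightarrow> 'k) \<Rightarrow> 'k" where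
  "cross_term x = (x 0*x 1 + x 0*x 2 + x 0*x 3 + x 1*x 2 + x 1*x 3 + x 2*x 3) + (1+u)*(x 2^2 + x 3^2)"

lemma nform_sum_square: "nform x = (x 0 + x 1 + x 2 + x 3)^2 - 2 * cross_term x"
  unfolding nform_def a_def cross_term_def by (simp add: algebra_simps power2_eq_square)

lemma cross_term_integral: "\<forall>i<4. nabs (x i) \<le> 1 \<Longrightarrow> nabs (cross_term x) \<le> 1"
  unfolding cross_term_def using u by (intro integral_intros) auto

lemma nform_le_p_iff_sum_le_p:
  assumes o: "\<forall>i<4. nabs (x i) \<le> 1"
  shows "nabs (nform x) \<le> p \<longleftrightarrow> nabs (x 0 + x 1 + x 2 + x 3) \<le> p"
proof -
  define S where "S = x 0 + x 1 + x 2 + x 3"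
  have S1: "nabs S \<le> 1" unfolding S_def using o by (intro integral_intros) auto
  have e: "nform x = S^2 - 2 * cross_term x" using nform_sum_square unfolding S_def by simp
  have g: "nabs (2 * cross_term x) \<le> p" using nabs_two_mult_le cross_term_integral[OF o] by blast
  show ?thesis
  proof
    assume "nabs (nform x) \<le> p"
    hence "nabs (nform x + 2 * cross_term x) \<le> p" using g nabs_add_le by blast
    hence "nabs (S^2) \<le> p" using e by simp
    thus "nabs (x 0 + x 1 + x 2 + x 3) \<le> p" using nabs_le_p_if_square_le_p S1 S_def by blast
  next
    assume "nabs (x 0 + x 1 + x 2 + x 3) \<le> p"
    hence "nabs (S^2) \<le> p" using S1 S_def nabs_mult_le_integral by (simp add: power2_eq_square)
    thus "nabs (nform x) \<le> p" using e g nabs_diff_le by simp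
  qed
qed

lemma cross_term_le_p:
  assumes o: "\<forall>i<4. nabs (x i) \<le> 1" and b: "nabs (nform x) \<le> p^2"
  shows "nabs (x 0 + x 1 + x 2 + x 3) \<le> p" and "nabs (cross_term x) \<le> p"
proof -
  show S: "nabs (x 0 + x 1 + x 2 + x 3) \<le> p"
    using nform_le_p_iff_sum_le_p[OF o] b p_power_le_iff[of 2 1] by simp
  define t where "t = (x 0 + x 1 + x 2 + x 3) / 2"
  have "nabs t \<le> 1" unfolding t_def using S by (rule nabs_half_le_1)
  hence "nabs (4*t^2) \<le> p^2"
    using nabs_mult_le_integral[of 4 "p^2" "t^2"] nabs_four by (simp add: power_le_one)
  moreover have "4*t^2 = (x 0 + x 1 + x 2 + x 3)^2"
    unfolding t_def using four_nonzero by (simp add: power_divide)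
  hence "2 * cross_term x = 4*t^2 - nform x" using nform_sum_square[of x] by simp
  ultimately have "nabs (2 * cross_term x) \<le> p^2" using b nabs_diff_le by simp
  thus "nabs (cross_term x) \<le> p" using p_pos by (simp add: nabs_mult nabs_two power2_eq_square)
qed

lemma nform_le_p2_imp_congruent:
  assumes o: "\<forall>i<4. nabs (x i) \<le> 1" and b: "nabs (nform x) \<le> p^2"
  shows "\<forall>i<4. nabs (x i - x 0) \<le> p"
proof -
  define t where "t = (x 0 + x 1 + x 2 + x 3) / 2"
  have t1: "nabs t \<le> 1" unfolding t_def using cross_term_le_p(1)[OF o b] by (rule nabs_half_le_1)
  have x3: "x 3 = 2*t - x 0 - x 1 - x 2" using two_nonzero unfolding t_def by (simp add: field_simps)
  define W where "W = u*x 0*x 1 + 2*u*x 0*x 2 + 2*u*x 1*x 2 + x 0*x 2 + x 1*x 2 + 2*t^2 + 2*t^2*u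
    - 2*t*u*x 0 - 2*t*u*x 1 - 2*t*u*x 2 - t*x 0 - t*x 1 - t*x 2"
  have "cross_term x = u*(x 0-x 2)^2 + (x 0-x 2)*(x 1-x 2) + u*(x 1-x 2)^2 + 2*W"
    unfolding cross_term_def x3 W_def by (rule cross_terms_identity)
  moreover have "nabs (2*W) \<le> p" unfolding W_def
    using o t1 u by (intro nabs_two_mult_le integral_intros) auto
  ultimately have "nabs (u*(x 0-x 2)^2 + (x 0-x 2)*(x 1-x 2) + u*(x 1-x 2)^2) \<le> p"
    using cross_term_le_p(2)[OF o b] nabs_diff_le by (metis add_diff_cancel_right')
  hence "nabs (x 0 - x 2) \<le> p \<and> nabs (x 1 - x 2) \<le> p"
    using o by (intro binary_form_anisotropic) (auto intro: integral_intros)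
  hence PR: "nabs (x 0 - x 2) \<le> p" "nabs (x 1 - x 2) \<le> p" by auto
  have "x 3 - x 2 = 2*t - (x 0 - x 2) - (x 1 - x 2) - 2*(2*x 2)" using x3 by (simp add: algebra_simps)
  moreover have "nabs (2*t) \<le> p" using t1 by (rule nabs_two_mult_le)
  moreover have "nabs (2*(2*x 2)) \<le> p" using o by (intro nabs_two_mult_le integral_intros) auto
  ultimately have P3: "nabs (x 3 - x 2) \<le> p" using PR by (metis nabs_diff_le)
  have "nabs (x 1 - x 0) \<le> p" "nabs (x 2 - x 0) \<le> p" "nabs (x 3 - x 0) \<le> p"
    using PR P3 nabs_minus_commute nabs_diff_le[of _ p "x 0 - x 2"] by (metis diff_diff_eq2 diff_add_cancel)+
  moreover have "i < 4 \<Longrightarrow> i = 0 \<or> i = 1 \<or> i = 2 \<or> i = 3" for i :: nat by auto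
  ultimately show ?thesis using p_pos by fastforce
qed

lemma nform_le_p2_cases:
  assumes o: "\<forall>i<4. nabs (x i) \<le> 1" and b: "nabs (nform x) \<le> p^2"
  shows "(\<forall>i<4. nabs (x i) \<le> p) \<or> (nabs (x 0) = 1 \<and> (\<forall>i<4. nabs (x i - x 0) \<le> p))"
proof (cases "nabs (x 0) = 1")
  case True thus ?thesis using nform_le_p2_imp_congruent[OF o b] by simp
next
  case False
  hence x0: "nabs (x 0) \<le> p" using integral_unit_or_le_p[of "x 0"] o by auto
  have "nabs ((x i - x 0) + x 0) \<le> p" if "i < 4" for i
    using nform_le_p2_imp_congruent[OF o b] that x0 nabs_add_le by blast
  thus ?thesis by simp
qed

lemma nform_diag_unit:
  assumes x0: "nabs (x 0) = 1" and c: "\<forall>i<4. nabs (x i - x 0) \<le> p"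
  shows "nabs (nform x) = p^2"
proof -
  define d1 where "d1 = (x 1 - x 0)/2"
  define d2 where "d2 = (x 2 - x 0)/2"
  define d3 where "d3 = (x 3 - x 0)/2"
  have d: "nabs d1 \<le> 1" "nabs d2 \<le> 1" "nabs d3 \<le> 1"
    unfolding d1_def d2_def d3_def using c by (auto intro!: nabs_half_le_1)
  have xe: "x 1 = x 0 + 2*d1" "x 2 = x 0 + 2*d2" "x 3 = x 0 + 2*d3"
    using two_nonzero by (simp_all add: d1_def d2_def d3_def field_simps)
  define D where "D = d1+d2+d3"
  define W where "W = (0 - d1*d2 - d1*d3 - d2*d3 - d2*u*x 0 - d2*x 0 - d2^2 - d2^2*u - d3*u*x 0 - d3*x 0 - d3^2 - d3^2*u)"
  have e: "nform x = 4*((D^2 + D*x 0 - u*x 0^2) + 2*W)"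
    unfolding nform_def a_def xe D_def W_def by (rule nform_near_diagonal_identity)
  have x00: "x 0 \<noteq> 0" using x0 by auto
  have D1: "nabs D \<le> 1" unfolding D_def using d by (intro integral_intros) auto
  have "D^2 + D*x 0 - u*x 0^2 = x 0^2 * ((D/x 0)^2 + D/x 0 - u)"
    using x00 by (simp add: field_simps power2_eq_square)
  moreover have "nabs ((D/x 0)^2 + D/x 0 - u) = 1"
    using no_root_mod_2[of "D/x 0"] D1 x0 by (simp add: nabs_divide)
  ultimately have m1: "nabs (D^2 + D*x 0 - u*x 0^2) = 1" using x0 by (simp add: nabs_mult)
  have "nabs (2*W) \<le> p" unfolding W_def using d x0 u by (intro nabs_two_mult_le integral_intros) auto
  hence h: "nabs ((D^2 + D*x 0 - u*x 0^2) + 2*W) = 1" using m1 p_less_1 nabs_add_dominant by simp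
  show ?thesis unfolding e nabs_mult nabs_four h by simp
qed

text \<open>Multiplication in the quaternion algebra with basis 1, i, j, ij and i^2 = -1, j^2 = a,
  whose reduced norm is nform.\<close>

definition qmult :: "(nat \<Rightarrow> 'k) \<Rightarrow> (nat \<Rightarrow> 'k) \<Rightarrow> nat \<Rightarrow> 'k" where
"qmult x y = (\<lambda>i. if i = 0 then x 0*y 0 - x 1*y 1 + a*x 2*y 2 + a*x 3*y 3
  else if i = 1 then x 0*y 1 + x 1*y 0 - a*x 2*y 3 + a*x 3*y 2
  else if i = 2 then x 0*y 2 + x 2*y 0 - x 1*y 3 + x 3*y 1
  else if i = 3 then x 0*y 3 + x 3*y 0 + x 1*y 2 - x 2*y 1 else 0)"

definition qconj :: "(nat \<Rightarrow> 'k) \<Rightarrow> nat \<Rightarrow> 'k" where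
  "qconj d = (\<lambda>i. if i = 0 then d 0 else if i < 4 then - d i else 0)"
definition qinverse :: "(nat \<Rightarrow> 'k) \<Rightarrow> nat \<Rightarrow> 'k" where
  "qinverse d = (\<lambda>i. qconj d i / nform d)"

lemma nabs_a_le_1: "nabs a \<le> 1" unfolding a_def using u by (intro integral_intros) auto

lemma nform_qmult: "nform (qmult d x) = nform d * nform x"
  unfolding nform_def qmult_def by (simp add: algebra_simps power2_eq_square)

lemma qmult_qconj_left: "i < 4 \<Longrightarrow> qmult (qconj d) (qmult d x) i = nform d * x i"
  unfolding nform_def qmult_def qconj_def
  by (auto simp: algebra_simps power2_eq_square numeral_eq_Suc less_Suc_eq)

lemma qmult_qconj_right: "i < 4 \<Longrightarrow> qmult d (qmult (qconj d) x) i = nform d * x i"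
  unfolding nform_def qmult_def qconj_def
  by (auto simp: algebra_simps power2_eq_square numeral_eq_Suc less_Suc_eq)

lemma qmult_scale_left: "qmult (\<lambda>i. c * d i) x i = c * qmult d x i"
  unfolding qmult_def by (simp add: algebra_simps)
lemma qmult_scale_right: "qmult d (\<lambda>i. c * x i) i = c * qmult d x i"
  unfolding qmult_def by (simp add: algebra_simps)

lemma qmult_diff: "qmult d x i - qmult d y i = qmult d (\<lambda>j. x j - y j) i"
  unfolding qmult_def by (simp add: algebra_simps)

lemma nabs_qmult_le:
  assumes d: "\<forall>j<4. nabs (d j) \<le> 1" and z: "\<forall>j<4. nabs (z j) \<le> M" and "M \<ge> 0"
  shows "nabs (qmult d z i) \<le> M"
proof -
  have d': "nabs (d 0) \<le> 1" "nabs (d 1) \<le> 1" "nabs (d 2) \<le> 1" "nabs (d 3) \<le> 1" using d by auto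
  have z': "nabs (z 0) \<le> M" "nabs (z 1) \<le> M" "nabs (z 2) \<le> M" "nabs (z 3) \<le> M" using z by auto
  have ad: "nabs (a * d j) \<le> 1" if "nabs (d j) \<le> 1" for j
    using nabs_a_le_1 that by (intro integral_intros)
  show ?thesis unfolding qmult_def using d' z' ad assms(3) nabs_a_le_1
    by (auto intro!: nabs_add_le nabs_diff_le nabs_integral_mult_le simp: mult.assoc[symmetric])
qed

lemma qmult_in_obox: "d \<in> obox nabs 4 \<Longrightarrow> x \<in> obox nabs 4 \<Longrightarrow> qmult d x \<in> obox nabs 4"
  unfolding obox_iff using nabs_qmult_le[of d x 1] by (auto simp: qmult_def)

lemma vcong_qmult: "d \<in> obox nabs 4 \<Longrightarrow> vcong nabs 4 m x y \<Longrightarrow> vcong nabs 4 m (qmult d x) (qmult d y)"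
  unfolding vcong_iff qmult_diff using p_pos by (intro allI impI nabs_qmult_le) (auto simp: obox_iff)

lemma qinverse_in_obox:
  assumes "d \<in> obox nabs 4" "nabs (nform d) = 1"
  shows "qinverse d \<in> obox nabs 4"
  using assms unfolding obox_iff qinverse_def qconj_def by (auto simp: nabs_divide)

lemma qmult_qinverse: "qmult (qinverse d) y i = (1 / nform d) * qmult (qconj d) y i"
proof -
  have "qinverse d = (\<lambda>i. (1 / nform d) * qconj d i)" unfolding qinverse_def by auto
  thus ?thesis by (simp only: qmult_scale_left)
qed

lemma qinverse_qmult_cancel:
  assumes "x \<in> obox nabs 4" "nform d \<noteq> 0"
  shows "qmult (qinverse d) (qmult d x) = x"
proof (rule ext)
  fix i show "qmult (qinverse d) (qmult d x) i = x i"
  proof (cases "i < 4")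
    case True
    have "qmult (qinverse d) (qmult d x) i = (1 / nform d) * qmult (qconj d) (qmult d x) i"
      by (rule qmult_qinverse)
    thus ?thesis using qmult_qconj_left[OF True] assms(2) by simp
  next
    case False thus ?thesis using assms(1) by (simp add: qmult_def obox_iff)
  qed
qed

lemma qmult_qinverse_cancel:
  assumes "x \<in> obox nabs 4" "nform d \<noteq> 0"
  shows "qmult d (qmult (qinverse d) x) = x"
proof (rule ext)
  fix i show "qmult d (qmult (qinverse d) x) i = x i"
  proof (cases "i < 4")
    case True
    have "qmult (qinverse d) x = (\<lambda>j. (1 / nform d) * qmult (qconj d) x j)"
      using qmult_qinverse by (auto simp: fun_eq_iff)
    hence "qmult d (qmult (qinverse d) x) i = (1 / nform d) * qmult d (qmult (qconj d) x) i"
      by (simp only: qmult_scale_right)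
    thus ?thesis using qmult_qconj_right[OF True] assms(2) by simp
  next
    case False thus ?thesis using assms(1) by (simp add: qmult_def obox_iff)
  qed
qed

lemma vcong_qmult_iff:
  assumes d: "d \<in> obox nabs 4" "nabs (nform d) = 1" and o: "x \<in> obox nabs 4" "y \<in> obox nabs 4"
  shows "vcong nabs 4 m (qmult d x) (qmult d y) \<longleftrightarrow> vcong nabs 4 m x y"
proof
  assume "vcong nabs 4 m (qmult d x) (qmult d y)"
  hence "vcong nabs 4 m (qmult (qinverse d) (qmult d x)) (qmult (qinverse d) (qmult d y))"
    using vcong_qmult qinverse_in_obox d by blast
  moreover have "nform d \<noteq> 0" using d(2) by auto
  ultimately show "vcong nabs 4 m x y" using qinverse_qmult_cancel o by simp
qed (use vcong_qmult d in blast)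

lemma qmult_image_fibre:
  assumes d: "d \<in> obox nabs 4" "nabs (nform d) = 1"
    and W: "W \<subseteq> obox nabs 4" "\<And>x. x \<in> obox nabs 4 \<Longrightarrow> qmult d x \<in> W \<longleftrightarrow> x \<in> W"
    and r: "nabs (nform d * \<rho> - \<rho>') \<le> p^k"
  shows "qmult d ` {x\<in>W. nabs (nform x - \<rho>) \<le> p^k} = {x\<in>W. nabs (nform x - \<rho>') \<le> p^k}"
proof
  show "qmult d ` {x\<in>W. nabs (nform x - \<rho>) \<le> p^k} \<subseteq> {x\<in>W. nabs (nform x - \<rho>') \<le> p^k}"
  proof
    fix y assume "y \<in> qmult d ` {x\<in>W. nabs (nform x - \<rho>) \<le> p^k}"
    then obtain x where x: "x \<in> W" "nabs (nform x - \<rho>) \<le> p^k" "y = qmult d x" by blast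
    have "nform y - \<rho>' = nform d * (nform x - \<rho>) + (nform d * \<rho> - \<rho>')"
      using x(3) nform_qmult by (simp add: algebra_simps)
    moreover have "nabs (nform d * (nform x - \<rho>)) \<le> p^k" using x d by (simp add: nabs_mult)
    hence "nabs (nform d * (nform x - \<rho>) + (nform d * \<rho> - \<rho>')) \<le> p^k"
      using r by (rule nabs_add_le)
    ultimately have "nabs (nform y - \<rho>') \<le> p^k" by (simp add: add_diff_eq)
    moreover have "y \<in> W" using W x by auto
    ultimately show "y \<in> {x\<in>W. nabs (nform x - \<rho>') \<le> p^k}" by simp
  qed
next
  show "{x\<in>W. nabs (nform x - \<rho>') \<le> p^k} \<subseteq> qmult d ` {x\<in>W. nabs (nform x - \<rho>) \<le> p^k}"
  proof
    fix y assume y: "y \<in> {x\<in>W. nabs (nform x - \<rho>') \<le> p^k}"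
    have yo: "y \<in> obox nabs 4" using y W by auto
    define x where "x = qmult (qinverse d) y"
    have xo: "x \<in> obox nabs 4" using qmult_in_obox qinverse_in_obox d yo x_def by blast
    have "nform d \<noteq> 0" using d(2) by auto
    hence yx: "y = qmult d x" using qmult_qinverse_cancel[OF yo] x_def by simp
    have xW: "x \<in> W" using W(2)[OF xo] yx y by simp
    have "nform d * (nform x - \<rho>) = (nform y - \<rho>') - (nform d * \<rho> - \<rho>')"
      using yx nform_qmult by (simp add: algebra_simps)
    moreover have "nabs ((nform y - \<rho>') - (nform d * \<rho> - \<rho>')) \<le> p^k"
      using y r by (intro nabs_diff_le[of "nform y - \<rho>'"]) auto
    ultimately have "nabs (nform d * (nform x - \<rho>)) \<le> p^k" by simp
    hence "nabs (nform x - \<rho>) \<le> p^k" using d by (simp add: nabs_mult)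
    thus "y \<in> qmult d ` {x\<in>W. nabs (nform x - \<rho>) \<le> p^k}" using xW yx by blast
  qed
qed

lemma nclasses_fibre_translate:
  assumes d: "d \<in> obox nabs 4" "nabs (nform d) = 1"
    and W: "W \<subseteq> obox nabs 4" "\<And>x. x \<in> obox nabs 4 \<Longrightarrow> qmult d x \<in> W \<longleftrightarrow> x \<in> W"
    and r: "nabs (nform d * \<rho> - \<rho>') \<le> p^k"
  shows "nclasses 4 m {x\<in>W. nabs (nform x - \<rho>') \<le> p^k} = nclasses 4 m {x\<in>W. nabs (nform x - \<rho>) \<le> p^k}"
proof -
  have "nclasses 4 m (qmult d ` {x\<in>W. nabs (nform x - \<rho>) \<le> p^k}) = nclasses 4 m {x\<in>W. nabs (nform x - \<rho>) \<le> p^k}"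
    by (rule nclasses_image) (use W qmult_in_obox vcong_qmult_iff d in auto)
  thus ?thesis using qmult_image_fibre[OF d W r] by simp
qed

definition vec4 :: "'k \<Rightarrow> 'k \<Rightarrow> 'k \<Rightarrow> 'k \<Rightarrow> nat \<Rightarrow> 'k" where
  "vec4 w0 w1 w2 w3 = (\<lambda>i. if i = 0 then w0 else if i = 1 then w1 else if i = 2 then w2 else if i = 3 then w3 else 0)"

lemma nform_vec4: "nform (vec4 w0 w1 w2 w3) = w0^2 + w1^2 - a*(w2^2 + w3^2)"
  by (simp add: nform_def vec4_def)
lemma vec4_in_obox: "nabs w0 \<le> 1 \<Longrightarrow> nabs w1 \<le> 1 \<Longrightarrow> nabs w2 \<le> 1 \<Longrightarrow> nabs w3 \<le> 1 \<Longrightarrow> vec4 w0 w1 w2 w3 \<in> obox nabs 4"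
  by (auto simp: vec4_def obox_iff)

text \<open>The witnesses are (1+y, 1+y, 1, 0) with y^2 = m + u, (1, 2z, 0, 0) with z^2 = m, and
  (1 + 2^(k-1) m, 0, 0, 0), the congruences being modulo 2.\<close>

lemma nform_approx_one_plus:
  assumes k: "k \<ge> 1" and m: "nabs m \<le> 1"
  shows "\<exists>e\<in>obox nabs 4. nabs (nform e - (1 + 2^k*m)) \<le> p^(Suc k)"
proof -
  consider "k = 1" | "k = 2" | "k \<ge> 3" using k by linarith
  thus ?thesis
  proof cases
    case 1
    have "nabs (m+u) \<le> 1" using m u by (intro integral_intros) auto
    then obtain y where y: "nabs y \<le> 1" "nabs (y^2 - (m+u)) \<le> p" using square_root_mod_2 by blast
    define e where "e = vec4 (1+y) (1+y) 1 0"
    have eo: "e \<in> obox nabs 4" unfolding e_def using y by (intro vec4_in_obox integral_intros) auto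
    have eq: "nform e - (1 + 2^k*m) = 2 * (2*y + (y^2 - (m+u)))"
      unfolding e_def nform_vec4 a_def 1 by (simp add: algebra_simps power2_eq_square)
    have h: "nabs (2*y + (y^2 - (m+u))) \<le> p" using y nabs_two_mult_le nabs_add_le by blast
    have "nabs (2 * (2*y + (y^2 - (m+u)))) \<le> p * p"
      using h p_pos unfolding nabs_mult nabs_two by (simp add: mult_left_mono)
    hence "nabs (nform e - (1 + 2^k*m)) \<le> p * p" unfolding eq .
    thus ?thesis using eo 1 by (auto simp: power2_eq_square)
  next
    case 2
    obtain z where z: "nabs z \<le> 1" "nabs (z^2 - m) \<le> p" using square_root_mod_2 m by blast
    define e where "e = vec4 1 (2*z) 0 0"
    have eo: "e \<in> obox nabs 4" unfolding e_def using z by (intro vec4_in_obox integral_intros) auto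
    have eq: "nform e - (1 + 2^k*m) = 4 * (z^2 - m)"
      unfolding e_def nform_vec4 2 by (simp add: algebra_simps power2_eq_square)
    have "nabs (4 * (z^2 - m)) \<le> p^2 * p"
      using z p_pos unfolding nabs_mult nabs_four by (simp add: mult_left_mono)
    hence "nabs (nform e - (1 + 2^k*m)) \<le> p^2 * p" unfolding eq .
    moreover have "p^2 * p = p^(Suc k)" using 2 by (simp add: numeral_eq_Suc)
    ultimately show ?thesis using eo by auto
  next
    case 3
    define e where "e = vec4 (1 + 2^(k-1)*m) 0 0 0"
    have eo: "e \<in> obox nabs 4" unfolding e_def
      using m by (intro vec4_in_obox integral_intros) (auto simp: nabs_mult p_pos less_imp_le power_le_one p_less_1 nabs_two intro: mult_le_one)
    have kk: "k = Suc (k-1)" using 3 by simp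
    have "nform e - (1 + 2^k*m) = (2^(k-1)*m)^2"
      unfolding e_def nform_vec4 by (subst kk) (simp add: algebra_simps power2_eq_square)
    hence "nabs (nform e - (1 + 2^k*m)) = (p^(k-1))^2 * nabs m ^2"
      by (simp add: nabs_mult power_mult_distrib nabs_two)
    also have "\<dots> \<le> (p^(k-1))^2" using m p_pos by (simp add: mult_left_le power_le_one)
    also have "\<dots> = p^(2*(k-1))" by (simp add: power_mult[symmetric] mult.commute)
    also have "\<dots> \<le> p^(Suc k)" using p_power_le_iff[of "2*(k-1)" "Suc k"] 3 by linarith
    finally show ?thesis using eo by blast
  qed
qed

lemma nform_approx_unit:
  assumes c: "nabs c = 1"
  shows "\<exists>d\<in>obox nabs 4. nabs (nform d - c) \<le> p^k"
proof (induction k)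
  case 0
  have "vec4 1 0 0 0 \<in> obox nabs 4" by (intro vec4_in_obox) auto
  moreover have "nabs (nform (vec4 1 0 0 0) - c) \<le> 1" using c by (simp add: nform_vec4 nabs_diff_le)
  ultimately show ?case by auto
next
  case (Suc k)
  show ?case
  proof (cases "k = 0")
    case True
    have "nabs c \<le> 1" using c by simp
    then obtain s where s: "nabs s \<le> 1" "nabs (s^2 - c) \<le> p" using square_root_mod_2 by blast
    have "vec4 s 0 0 0 \<in> obox nabs 4" using s by (intro vec4_in_obox) auto
    moreover have "nabs (nform (vec4 s 0 0 0) - c) \<le> p" using s by (simp add: nform_vec4)
    ultimately show ?thesis using True by auto
  next
    case False
    obtain d where d: "d \<in> obox nabs 4" "nabs (nform d - c) \<le> p^k" using Suc by blast
    define N where "N = nform d"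
    have "p^k \<le> p" using False p_power_le_iff[of k 1] by simp
    hence "nabs (N - c) < 1" using d p_less_1 N_def by simp
    hence N1: "nabs N = 1" using nabs_add_dominant[of "N - c" c] c by (simp add: nabs_minus_commute)
    hence N0: "N \<noteq> 0" by auto
    define m where "m = (c - N) / (N * 2^k)"
    have m1: "nabs m \<le> 1"
      using d N1 p_pos nabs_minus_commute[of c N]
      by (simp add: m_def nabs_divide nabs_mult N_def nabs_two divide_le_eq)
    have cm: "c = N * (1 + 2^k*m)" using N0 two_nonzero by (simp add: m_def field_simps)
    obtain e where e: "e \<in> obox nabs 4" "nabs (nform e - (1 + 2^k*m)) \<le> p^(Suc k)"
      using nform_approx_one_plus[OF _ m1] False by (metis less_one not_less)
    have "nform (qmult d e) - c = N * (nform e - (1 + 2^k*m))"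
      using cm nform_qmult N_def by (simp add: algebra_simps)
    hence "nabs (nform (qmult d e) - c) \<le> p^(Suc k)" using e N1 by (simp add: nabs_mult)
    moreover have "qmult d e \<in> obox nabs 4" using qmult_in_obox d e by blast
    ultimately show ?thesis by blast
  qed
qed

section \<open>Counting solutions of B(x) = \<rho> modulo powers of 2\<close>

definition level_set :: "nat \<Rightarrow> 'k \<Rightarrow> (nat \<Rightarrow> 'k) set" where
  "level_set l \<rho> = {x \<in> obox nabs 4. nabs (nform x - \<rho>) \<le> p^(Suc l)}"

lemma obox4_integral: "x \<in> obox nabs 4 \<Longrightarrow> \<forall>i<4. nabs (x i) \<le> 1" by (auto simp: obox_iff)

lemma nform_vcong:
  assumes "x \<in> obox nabs 4" "y \<in> obox nabs 4" "vcong nabs 4 m x y"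
  shows "nabs (nform x - nform y) \<le> p^m"
proof -
  have h1: "nabs (x i - y i) \<le> p^m" if "i < 4" for i
    using assms(3) that by (simp add: vcong_iff)
  have h2: "nabs (x i + y i) \<le> 1" if "i < 4" for i
    using assms(1,2) that by (intro integral_intros) (auto simp: obox_iff)
  have e: "nform x - nform y = (x 0 - y 0)*(x 0 + y 0) + (x 1 - y 1)*(x 1 + y 1)
     - a*((x 2 - y 2)*(x 2 + y 2) + (x 3 - y 3)*(x 3 + y 3))"
    unfolding nform_def by (simp add: algebra_simps power2_eq_square)
  have t: "nabs ((x i - y i)*(x i + y i)) \<le> p^m" if "i < 4" for i
    using nabs_mult_le_integral h1[OF that] h2[OF that] by blast
  have t0: "nabs ((x 0 - y 0)*(x 0 + y 0)) \<le> p^m" using t[of 0] by simp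
  have t1: "nabs ((x 1 - y 1)*(x 1 + y 1)) \<le> p^m" using t[of 1] by simp
  have t2: "nabs ((x 2 - y 2)*(x 2 + y 2)) \<le> p^m" using t[of 2] by simp
  have t3: "nabs ((x 3 - y 3)*(x 3 + y 3)) \<le> p^m" using t[of 3] by simp
  have "nabs (a*((x 2 - y 2)*(x 2 + y 2) + (x 3 - y 3)*(x 3 + y 3))) \<le> p^m"
    by (rule nabs_integral_mult_le[OF nabs_a_le_1 nabs_add_le[OF t2 t3]])
  moreover have "nabs ((x 0 - y 0)*(x 0 + y 0) + (x 1 - y 1)*(x 1 + y 1)) \<le> p^m"
    by (rule nabs_add_le[OF t0 t1])
  ultimately show ?thesis unfolding e by (rule nabs_diff_le[rotated])
qed

lemma saturated_level_set: "saturated 4 (Suc l) (level_set l \<rho>)"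
  unfolding saturated_def
proof (intro conjI ballI impI)
  show "level_set l \<rho> \<subseteq> obox nabs 4" by (auto simp: level_set_def)
  fix x y assume x: "x \<in> level_set l \<rho>" and y: "y \<in> obox nabs 4" and v: "vcong nabs 4 (Suc l) x y"
  have xo: "x \<in> obox nabs 4" "nabs (nform x - \<rho>) \<le> p^(Suc l)" using x by (auto simp: level_set_def)
  have "nabs (nform y - nform x) \<le> p^(Suc l)" using nform_vcong[OF y xo(1)] v vcong_sym by blast
  hence "nabs ((nform y - nform x) + (nform x - \<rho>)) \<le> p^(Suc l)" using xo by (intro nabs_add_le) auto
  thus "y \<in> level_set l \<rho>" using y by (simp add: level_set_def)
qed

lemma X_l_level_set: "X_l nabs 4 nform \<rho> l = real (nclasses 4 (Suc l) (level_set l \<rho>)) / real q^(4*Suc l)"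
proof -
  have "X_l nabs 4 nform \<rho> l = haar_meas nabs 4 (level_set l \<rho>)"
    unfolding X_l_def level_set_def by (simp add: p_def)
  thus ?thesis using haar_meas_saturated[OF saturated_level_set] by simp
qed

abbreviation XB :: "nat \<Rightarrow> 'k \<Rightarrow> real" where
  "XB l \<rho> \<equiv> X_l nabs 4 nform \<rho> l"

lemma XB_eq_nclasses: "XB l \<rho> = real (nclasses 4 (Suc l) (level_set l \<rho>)) * p^(4*Suc l)"
proof -
  have "real q ^ (4*Suc l) \<noteq> 0" using q_ge_2 by simp
  hence "1 / real q ^ (4*Suc l) = p^(4*Suc l)"
    using q_power_mult_p_power[of "4*Suc l"] by (simp add: field_simps)
  moreover have "real (nclasses 4 (Suc l) (level_set l \<rho>)) / real q ^ (4*Suc l) = real (nclasses 4 (Suc l) (level_set l \<rho>)) * (1 / real q ^ (4*Suc l))"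
    by simp
  ultimately show ?thesis using X_l_level_set[of \<rho> l] by simp
qed

definition unit_norms :: "(nat \<Rightarrow> 'k) set" where "unit_norms = {x \<in> obox nabs 4. nabs (nform x) = 1}"
definition nonunit_norms :: "(nat \<Rightarrow> 'k) set" where "nonunit_norms = {x \<in> obox nabs 4. nabs (nform x) \<le> p}"

lemma saturated_unit_norms: "saturated 4 1 unit_norms"
  unfolding saturated_def
proof (intro conjI ballI impI)
  show "unit_norms \<subseteq> obox nabs 4" by (auto simp: unit_norms_def)
  fix x y assume x: "x \<in> unit_norms" and y: "y \<in> obox nabs 4" and v: "vcong nabs 4 1 x y"
  have xo: "x \<in> obox nabs 4" "nabs (nform x) = 1" using x by (auto simp: unit_norms_def)
  have "nabs (nform y - nform x) \<le> p" using nform_vcong[OF y xo(1), of 1] v vcong_sym by simp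
  hence "nabs (nform y - nform x + nform x) = 1"
    using nabs_add_dominant[of "nform y - nform x" "nform x"] xo p_less_1 by (simp add: add.commute)
  thus "y \<in> unit_norms" using y by (simp add: unit_norms_def)
qed

lemma saturated_nonunit_norms: "saturated 4 1 nonunit_norms"
  unfolding saturated_def
proof (intro conjI ballI impI)
  show "nonunit_norms \<subseteq> obox nabs 4" by (auto simp: nonunit_norms_def)
  fix x y assume x: "x \<in> nonunit_norms" and y: "y \<in> obox nabs 4" and v: "vcong nabs 4 1 x y"
  have xo: "x \<in> obox nabs 4" "nabs (nform x) \<le> p" using x by (auto simp: nonunit_norms_def)
  have "nabs (nform y - nform x) \<le> p" using nform_vcong[OF y xo(1), of 1] v vcong_sym by simp
  hence "nabs ((nform y - nform x) + nform x) \<le> p" using xo nabs_add_le by blast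
  thus "y \<in> nonunit_norms" using y by (simp add: nonunit_norms_def)
qed

lemma obox4_unit_nonunit_norms: "obox nabs 4 = unit_norms \<union> nonunit_norms" "unit_norms \<inter> nonunit_norms = {}"
  unfolding unit_norms_def nonunit_norms_def
    using nform_integral obox4_integral integral_unit_or_le_p p_less_1 by force+

definition small_first_coord :: "(nat \<Rightarrow> 'k) set" where
  "small_first_coord = {x\<in>obox nabs 4. \<forall>i<4. x i \<in> (if i = 0 then {y. nabs y \<le> p} else {y. nabs y \<le> 1})}"

lemma nclasses_small_first_coord: "nclasses 4 1 small_first_coord = q^3"
proof -
  have "nclasses 4 1 small_first_coord = (\<Prod>i<(4::nat). card (residue ` (if i = 0 then {y. nabs y \<le> p} else {y. nabs y \<le> 1})))"
    unfolding nclasses_def small_first_coord_def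
    by (rule card_classes1_product[THEN conjunct1]) (auto split: if_splits simp: p_less_1 less_imp_le intro: order_trans[OF _ less_imp_le[OF p_less_1]])
  also have "\<dots> = q^3"
    by (simp add: lessThan_nat_numeral residue_nonunits card_residues_integral numeral_eq_Suc)
  finally show ?thesis .
qed

definition sum_shear :: "(nat \<Rightarrow> 'k) \<Rightarrow> nat \<Rightarrow> 'k" where
  "sum_shear x = (\<lambda>i. if i = 0 then x 0 + x 1 + x 2 + x 3 else x i)"
definition sum_shear_inv :: "(nat \<Rightarrow> 'k) \<Rightarrow> nat \<Rightarrow> 'k" where
  "sum_shear_inv x = (\<lambda>i. if i = 0 then x 0 - x 1 - x 2 - x 3 else x i)"

lemma sum_shear_in_obox: "x \<in> obox nabs 4 \<Longrightarrow> sum_shear x \<in> obox nabs 4"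
  unfolding obox_iff sum_shear_def by (auto intro!: integral_intros)
lemma sum_shear_inv_in_obox: "x \<in> obox nabs 4 \<Longrightarrow> sum_shear_inv x \<in> obox nabs 4"
  unfolding obox_iff sum_shear_inv_def by (auto intro!: integral_intros)
lemma sum_shear_sum_shear_inv: "sum_shear (sum_shear_inv x) = x" by (auto simp: sum_shear_def sum_shear_inv_def fun_eq_iff)

lemma vcong_sum_shear:
  assumes "x \<in> obox nabs 4" "y \<in> obox nabs 4"
  shows "vcong nabs 4 m (sum_shear x) (sum_shear y) \<longleftrightarrow> vcong nabs 4 m x y"
proof
  assume h: "vcong nabs 4 m (sum_shear x) (sum_shear y)"
  have h': "nabs (sum_shear x i - sum_shear y i) \<le> p^m" if "i < 4" for i
    using h that by (simp add: vcong_iff)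
  have d1: "nabs (x i - y i) \<le> p^m" if "i \<noteq> 0" "i < 4" for i
    using h'[OF that(2)] that by (simp add: sum_shear_def)
  have "x 0 - y 0 = (sum_shear x 0 - sum_shear y 0) - (x 1 - y 1) - (x 2 - y 2) - (x 3 - y 3)"
    by (simp add: sum_shear_def algebra_simps)
  moreover have "nabs ((sum_shear x 0 - sum_shear y 0) - (x 1 - y 1) - (x 2 - y 2) - (x 3 - y 3)) \<le> p^m"
    using h'[of 0] d1[of 1] d1[of 2] d1[of 3] by (intro nabs_diff3_le) auto
  ultimately have "nabs (x 0 - y 0) \<le> p^m" by simp
  thus "vcong nabs 4 m x y" using d1 by (auto simp: vcong_iff) (metis neq0_conv)
next
  assume h: "vcong nabs 4 m x y"
  have h': "nabs (x i - y i) \<le> p^m" if "i < 4" for i using h that by (simp add: vcong_iff)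
  have "sum_shear x 0 - sum_shear y 0 = (x 0 - y 0) + (x 1 - y 1) + (x 2 - y 2) + (x 3 - y 3)"
    by (simp add: sum_shear_def algebra_simps)
  moreover have "nabs ((x 0 - y 0) + (x 1 - y 1) + (x 2 - y 2) + (x 3 - y 3)) \<le> p^m"
    using h'[of 0] h'[of 1] h'[of 2] h'[of 3] by (intro nabs_add3_le) auto
  ultimately have h0: "nabs (sum_shear x 0 - sum_shear y 0) \<le> p^m" by simp
  show "vcong nabs 4 m (sum_shear x) (sum_shear y)" unfolding vcong_iff
  proof (intro allI impI)
    fix i :: nat assume "i < 4"
    thus "nabs (sum_shear x i - sum_shear y i) \<le> p^m"
      using h0 h' by (cases "i = 0") (auto simp: sum_shear_def)
  qed
qed

lemma sum_shear_nonunit_norms: "sum_shear ` nonunit_norms = small_first_coord"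
proof
  show "sum_shear ` nonunit_norms \<subseteq> small_first_coord"
  proof
    fix y assume "y \<in> sum_shear ` nonunit_norms"
    then obtain x where x: "x \<in> nonunit_norms" "y = sum_shear x" by blast
    have xo: "x \<in> obox nabs 4" "nabs (nform x) \<le> p" using x by (auto simp: nonunit_norms_def)
    have "nabs (x 0 + x 1 + x 2 + x 3) \<le> p"
      using nform_le_p_iff_sum_le_p[OF obox4_integral[OF xo(1)]] xo by simp
    thus "y \<in> small_first_coord"
      using sum_shear_in_obox[OF xo(1)] x obox4_integral[OF sum_shear_in_obox[OF xo(1)]]
      by (auto simp: small_first_coord_def sum_shear_def)
  qed
next
  show "small_first_coord \<subseteq> sum_shear ` nonunit_norms"
  proof
    fix y assume y: "y \<in> small_first_coord"
    have yo: "y \<in> obox nabs 4" using y by (simp add: small_first_coord_def)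
    define x where "x = sum_shear_inv y"
    have xo: "x \<in> obox nabs 4" using sum_shear_inv_in_obox yo x_def by simp
    have "x 0 + x 1 + x 2 + x 3 = y 0" by (simp add: x_def sum_shear_inv_def)
    moreover have "\<forall>i<4. y i \<in> (if i = 0 then {y. nabs y \<le> p} else {y. nabs y \<le> 1})"
      using y unfolding small_first_coord_def by simp
    hence "nabs (y 0) \<le> p" by (drule_tac x=0 in spec) simp
    ultimately have "nabs (nform x) \<le> p" using nform_le_p_iff_sum_le_p[OF obox4_integral[OF xo]] by simp
    hence "x \<in> nonunit_norms" using xo by (simp add: nonunit_norms_def)
    thus "y \<in> sum_shear ` nonunit_norms" using sum_shear_sum_shear_inv x_def by (metis imageI)
  qed
qed

lemma nclasses_nonunit_norms: "nclasses 4 1 nonunit_norms = q^3"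
proof -
  have "nclasses 4 1 (sum_shear ` nonunit_norms) = nclasses 4 1 nonunit_norms"
    by (rule nclasses_image) (use saturated_nonunit_norms saturated_subset sum_shear_in_obox vcong_sum_shear in auto)
  thus ?thesis using sum_shear_nonunit_norms nclasses_small_first_coord by simp
qed

lemma nclasses_unit_norms: "nclasses 4 1 unit_norms = q^4 - q^3"
proof -
  have "nclasses 4 1 (obox nabs 4) = nclasses 4 1 unit_norms + nclasses 4 1 nonunit_norms"
    using obox4_unit_nonunit_norms nclasses_Un[OF saturated_unit_norms saturated_nonunit_norms] by simp
  thus ?thesis using nclasses_obox[of 4 1] nclasses_nonunit_norms by simp
qed

lemma level_set_unit: "nabs c = 1 \<Longrightarrow> level_set l c = {x \<in> unit_norms. nabs (nform x - c) \<le> p^(Suc l)}"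
proof -
  assume c: "nabs c = 1"
  have "nabs (nform x) = 1" if "nabs (nform x - c) \<le> p^(Suc l)" for x
  proof -
    have "p^(Suc l) < 1" by (rule p_Suc_power_less_1)
    thus ?thesis using nabs_add_dominant[of "nform x - c" c] that c by simp
  qed
  thus ?thesis unfolding level_set_def unit_norms_def by auto
qed

lemma nclasses_level_set_unit_eq: "nabs c = 1 \<Longrightarrow> nclasses 4 (Suc l) (level_set l c) = nclasses 4 (Suc l) (level_set l 1)"
proof -
  assume c: "nabs c = 1"
  obtain d where d: "d \<in> obox nabs 4" "nabs (nform d - c) \<le> p^(Suc l)"
    using nform_approx_unit c by blast
  have d1: "nabs (nform d) = 1"
  proof -
    have "p^(Suc l) < 1" by (rule p_Suc_power_less_1)
    thus ?thesis using nabs_add_dominant[of "nform d - c" c] d c by simp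
  qed
  have "nclasses 4 (Suc l) {x\<in>obox nabs 4. nabs (nform x - c) \<le> p^(Suc l)} = nclasses 4 (Suc l) {x\<in>obox nabs 4. nabs (nform x - 1) \<le> p^(Suc l)}"
    by (rule nclasses_fibre_translate) (use d d1 qmult_in_obox in auto)
  thus ?thesis by (simp add: level_set_def)
qed

lemma nclasses_level_set_unit: "nabs c = 1 \<Longrightarrow> nclasses 4 (Suc l) (level_set l c) = q^(3*l+3)"
proof -
  assume c: "nabs c = 1"
  define N where "N = nclasses 4 (Suc l) (level_set l 1)"
  have "nclasses 4 (Suc l) unit_norms = N * nclasses 1 (Suc l) units1"
  proof (rule nclasses_by_fibres)
    show "unit_norms \<subseteq> obox nabs 4" by (auto simp: unit_norms_def)
    show "units1 \<subseteq> obox nabs 1" by (auto simp: units1_def)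
    show "\<And>x. x \<in> unit_norms \<Longrightarrow> vec1 (nform x) \<in> units1"
      by (auto simp: unit_norms_def units1_def vec1_def obox_iff)
    show "\<And>x y. x \<in> unit_norms \<Longrightarrow> y \<in> unit_norms \<Longrightarrow> vcong nabs 4 (Suc l) x y \<Longrightarrow> nabs (nform x - nform y) \<le> p^(Suc l)"
    proof -
      fix x y assume "x \<in> unit_norms" "y \<in> unit_norms" "vcong nabs 4 (Suc l) x y"
      thus "nabs (nform x - nform y) \<le> p^(Suc l)" by (intro nform_vcong) (auto simp: unit_norms_def)
    qed
    fix c' assume "vec1 c' \<in> units1"
    hence c': "nabs c' = 1" by (simp add: units1_def vec1_def)
    show "nclasses 4 (Suc l) {x\<in>unit_norms. nabs (nform x - c') \<le> p^(Suc l)} = N"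
      using level_set_unit[OF c'] nclasses_level_set_unit_eq[OF c'] N_def by simp
  qed
  moreover have "nclasses 4 (Suc l) unit_norms = q^(4*l) * nclasses 4 1 unit_norms"
    using nclasses_add[OF saturated_unit_norms, of l] by simp
  ultimately have "N * (q^(Suc l) - q^l) = q^(4*l) * (q^4 - q^3)"
    using nclasses_unit_norms nclasses_units1 by simp
  moreover have "q^(Suc l) - q^l = q^l * (q - 1)" by (simp add: algebra_simps)
  moreover have "q^4 - q^3 = q^3 * (q - 1)" by (simp add: algebra_simps numeral_eq_Suc)
  ultimately have "N * q^l * (q - 1) = q^l * q^(3*l+3) * (q - 1)"
    by (simp add: power_add[symmetric] algebra_simps)
  moreover have "q - 1 > 0" "q^l > 0" using q_ge_2 by auto
  ultimately have "N = q^(3*l+3)" by simp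
  thus ?thesis using nclasses_level_set_unit_eq[OF c] N_def by simp
qed

lemma XB_unit: "nabs c = 1 \<Longrightarrow> XB l c = p^(Suc l)"
proof -
  assume c: "nabs c = 1"
  have "XB l c = real (q^(3*l+3)) / real q^(4*Suc l)" using X_l_level_set nclasses_level_set_unit[OF c] by simp
  also have "\<dots> = 1 / real q^(Suc l)"
  proof -
    have e: "4 * Suc l = (3*l+3) + Suc l" by simp
    have "real q^(4*Suc l) = real q^(3*l+3) * real q^(Suc l)" unfolding e by (rule power_add)
    thus ?thesis using q_ge_2 by simp
  qed
  also have "\<dots> = p^(Suc l)" using p_eq by (simp add: power_one_over)
  finally show ?thesis .
qed

definition diag_units :: "(nat \<Rightarrow> 'k) set" where
  "diag_units = {x \<in> obox nabs 4. nabs (x 0) = 1 \<and> (\<forall>i<4. nabs (x i - x 0) \<le> p)}"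

lemma diag_units_iff:
  assumes x: "x \<in> obox nabs 4"
  shows "x \<in> diag_units \<longleftrightarrow> \<not> (\<forall>i<4. nabs (x i) \<le> p) \<and> nabs (nform x) \<le> p^2"
proof
  assume "x \<in> diag_units"
  hence c: "nabs (x 0) = 1" "\<forall>i<4. nabs (x i - x 0) \<le> p" by (auto simp: diag_units_def)
  have "nabs (nform x) = p^2" using nform_diag_unit c by blast
  moreover have "\<not> nabs (x 0) \<le> p" using c p_less_1 by simp
  hence "\<not> (\<forall>i<4. nabs (x i) \<le> p)" by (meson zero_less_numeral)
  ultimately show "\<not> (\<forall>i<4. nabs (x i) \<le> p) \<and> nabs (nform x) \<le> p^2" by simp
next
  assume h: "\<not> (\<forall>i<4. nabs (x i) \<le> p) \<and> nabs (nform x) \<le> p^2"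
  thus "x \<in> diag_units" using nform_le_p2_cases[OF obox4_integral[OF x]] x by (auto simp: diag_units_def)
qed

lemma nform_diag_units: "x \<in> diag_units \<Longrightarrow> nabs (nform x) = p^2"
  using nform_diag_unit by (auto simp: diag_units_def)

lemma nform_gt_p2:
  assumes x: "x \<in> obox nabs 4" "x \<notin> double_obox 4" "x \<notin> diag_units"
  shows "p^2 < nabs (nform x)"
proof -
  have "\<not> (\<forall>i<4. nabs (x i) \<le> p)" using x by (auto simp: double_obox_def)
  thus ?thesis using diag_units_iff[OF x(1)] x(3) by auto
qed

lemma saturated_diag_units: "saturated 4 1 diag_units"
  unfolding saturated_def
proof (intro conjI ballI impI)
  show "diag_units \<subseteq> obox nabs 4" by (auto simp: diag_units_def)
  fix x y assume x: "x \<in> diag_units" and y: "y \<in> obox nabs 4" and v: "vcong nabs 4 1 x y"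
  have d: "nabs (y i - x i) \<le> p" if "i < 4" for i using v that by (simp add: vcong_iff nabs_minus_commute)
  have xc: "nabs (x 0) = 1" "\<forall>i<4. nabs (x i - x 0) \<le> p" using x by (auto simp: diag_units_def)
  have "nabs ((y 0 - x 0) + x 0) = 1"
    using nabs_add_dominant[of "y 0 - x 0" "x 0"] d[of 0] xc p_less_1 by (simp add: add.commute)
  hence y0: "nabs (y 0) = 1" by simp
  have "nabs (y i - y 0) \<le> p" if "i < 4" for i
  proof -
    have "y i - y 0 = (y i - x i) + (x i - x 0) - (y 0 - x 0)" by simp
    moreover have "nabs ((y i - x i) + (x i - x 0) - (y 0 - x 0)) \<le> p"
      using that by (intro nabs_diff_le[OF nabs_add_le[OF d[OF that]] d[of 0]]) (use xc(2) in auto)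
    ultimately show ?thesis by simp
  qed
  thus "y \<in> diag_units" using y y0 by (simp add: diag_units_def)
qed

lemma double_obox_diag_units_disjoint: "double_obox 4 \<inter> diag_units = {}" unfolding double_obox_def diag_units_def using p_less_1 by (auto dest!: spec[of _ 0])

definition diag_units0 :: "(nat \<Rightarrow> 'k) set" where
  "diag_units0 = {x\<in>obox nabs 4. \<forall>i<4. x i \<in> (if i = 0 then units else {y. nabs y \<le> p})}"

lemma nclasses_diag_units0: "nclasses 4 1 diag_units0 = q - 1"
proof -
  have "nclasses 4 1 diag_units0 = (\<Prod>i<(4::nat). card (residue ` (if i = 0 then units else {y. nabs y \<le> p})))"
    unfolding nclasses_def diag_units0_def
    by (rule card_classes1_product[THEN conjunct1]) (auto split: if_splits simp: units_def intro: order_trans[OF _ less_imp_le[OF p_less_1]])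
  also have "\<dots> = q - 1"
    by (simp add: lessThan_nat_numeral residue_nonunits card_residues_units numeral_eq_Suc)
  finally show ?thesis .
qed

definition diag_shear :: "(nat \<Rightarrow> 'k) \<Rightarrow> nat \<Rightarrow> 'k" where
  "diag_shear x = (\<lambda>i. if i = 0 \<or> 4 \<le> i then x i else x i - x 0)"
definition diag_shear_inv :: "(nat \<Rightarrow> 'k) \<Rightarrow> nat \<Rightarrow> 'k" where
  "diag_shear_inv x = (\<lambda>i. if i = 0 \<or> 4 \<le> i then x i else x i + x 0)"

lemma diag_shear_in_obox: "x \<in> obox nabs 4 \<Longrightarrow> diag_shear x \<in> obox nabs 4"
  unfolding obox_iff diag_shear_def by (auto intro!: integral_intros)
lemma diag_shear_inv_in_obox: "x \<in> obox nabs 4 \<Longrightarrow> diag_shear_inv x \<in> obox nabs 4"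
  unfolding obox_iff diag_shear_inv_def by (auto intro!: integral_intros)
lemma diag_shear_diag_shear_inv: "diag_shear (diag_shear_inv x) = x" by (auto simp: diag_shear_def diag_shear_inv_def fun_eq_iff)

lemma vcong_diag_shear:
  assumes "x \<in> obox nabs 4" "y \<in> obox nabs 4"
  shows "vcong nabs 4 m (diag_shear x) (diag_shear y) \<longleftrightarrow> vcong nabs 4 m x y"
proof
  assume h: "vcong nabs 4 m (diag_shear x) (diag_shear y)"
  have h': "nabs (diag_shear x i - diag_shear y i) \<le> p^m" if "i < 4" for i
    using h that by (simp add: vcong_iff)
  have h0: "nabs (x 0 - y 0) \<le> p^m" using h'[of 0] by (simp add: diag_shear_def)
  show "vcong nabs 4 m x y" unfolding vcong_iff
  proof (intro allI impI)
    fix i :: nat assume i: "i < 4"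
    show "nabs (x i - y i) \<le> p^m"
    proof (cases "i = 0")
      case True thus ?thesis using h0 by simp
    next
      case False
      have "x i - y i = (diag_shear x i - diag_shear y i) + (x 0 - y 0)"
        using False i by (simp add: diag_shear_def)
      thus ?thesis using h'[OF i] h0 nabs_add_le by simp
    qed
  qed
next
  assume h: "vcong nabs 4 m x y"
  have h': "nabs (x i - y i) \<le> p^m" if "i < 4" for i using h that by (simp add: vcong_iff)
  show "vcong nabs 4 m (diag_shear x) (diag_shear y)" unfolding vcong_iff
  proof (intro allI impI)
    fix i :: nat assume i: "i < 4"
    show "nabs (diag_shear x i - diag_shear y i) \<le> p^m"
    proof (cases "i = 0")
      case True thus ?thesis using h'[of 0] by (simp add: diag_shear_def)
    next
      case False
      have "diag_shear x i - diag_shear y i = (x i - y i) - (x 0 - y 0)"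
        using False i by (simp add: diag_shear_def)
      thus ?thesis using h'[OF i] h'[of 0] nabs_diff_le by simp
    qed
  qed
qed

lemma diag_shear_diag_units: "diag_shear ` diag_units = diag_units0"
proof
  show "diag_shear ` diag_units \<subseteq> diag_units0"
  proof
    fix y assume "y \<in> diag_shear ` diag_units"
    then obtain x where x: "x \<in> diag_units" "y = diag_shear x" by blast
    have xo: "x \<in> obox nabs 4" "nabs (x 0) = 1" "\<forall>i<4. nabs (x i - x 0) \<le> p"
      using x by (auto simp: diag_units_def)
    have "\<forall>i<4. y i \<in> (if i = 0 then units else {y. nabs y \<le> p})"
      using xo x by (auto simp: diag_shear_def units_def)
    thus "y \<in> diag_units0" using diag_shear_in_obox[OF xo(1)] x by (simp add: diag_units0_def)
  qed
next
  show "diag_units0 \<subseteq> diag_shear ` diag_units"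
  proof
    fix y assume y: "y \<in> diag_units0"
    have yo: "y \<in> obox nabs 4" using y by (simp add: diag_units0_def)
    have yc: "\<forall>i<4. y i \<in> (if i = 0 then units else {y. nabs y \<le> p})"
      using y by (simp add: diag_units0_def)
    define x where "x = diag_shear_inv y"
    have xo: "x \<in> obox nabs 4" using diag_shear_inv_in_obox yo x_def by simp
    have "nabs (x 0) = 1" using yc by (drule_tac x=0 in spec) (simp add: x_def diag_shear_inv_def units_def)
    moreover have "\<forall>i<4. nabs (x i - x 0) \<le> p"
    proof (intro allI impI)
      fix i :: nat assume i: "i < 4"
      show "nabs (x i - x 0) \<le> p"
      proof (cases "i = 0")
        case True thus ?thesis using p_pos by simp
      next
        case False
        have "y i \<in> {y. nabs y \<le> p}" using yc i False by (drule_tac x=i in spec) simp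
        thus ?thesis using False i by (simp add: x_def diag_shear_inv_def)
      qed
    qed
    ultimately have "x \<in> diag_units" using xo by (simp add: diag_units_def)
    thus "y \<in> diag_shear ` diag_units" using diag_shear_diag_shear_inv x_def by (metis imageI)
  qed
qed

lemma nclasses_diag_units: "nclasses 4 1 diag_units = q - 1"
proof -
  have "nclasses 4 1 (diag_shear ` diag_units) = nclasses 4 1 diag_units"
    by (rule nclasses_image) (use saturated_diag_units saturated_subset diag_shear_in_obox vcong_diag_shear in auto)
  thus ?thesis using diag_shear_diag_units nclasses_diag_units0 by simp
qed

lemma small_qmult:
  assumes d: "d \<in> obox nabs 4" and x: "\<forall>i<4. nabs (x i) \<le> p"
  shows "\<forall>i<4. nabs (qmult d x i) \<le> p"
  using nabs_qmult_le[of d x p] d x p_pos by (auto simp: obox_iff)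

lemma qmult_diag_units_iff:
  assumes d: "d \<in> obox nabs 4" "nabs (nform d) = 1" and x: "x \<in> obox nabs 4"
  shows "qmult d x \<in> diag_units \<longleftrightarrow> x \<in> diag_units"
proof -
  have qo: "qmult d x \<in> obox nabs 4" using qmult_in_obox d x by blast
  have B0: "nform d \<noteq> 0" using d by auto
  have sm: "(\<forall>i<4. nabs (qmult d x i) \<le> p) \<longleftrightarrow> (\<forall>i<4. nabs (x i) \<le> p)"
  proof
    assume "\<forall>i<4. nabs (qmult d x i) \<le> p"
    hence "\<forall>i<4. nabs (qmult (qinverse d) (qmult d x) i) \<le> p"
      using small_qmult qinverse_in_obox d by blast
    thus "\<forall>i<4. nabs (x i) \<le> p" using qinverse_qmult_cancel[OF x B0] by simp
  qed (use small_qmult d in blast)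
  have "nabs (nform (qmult d x)) = nabs (nform x)" using d by (simp add: nform_qmult nabs_mult)
  thus ?thesis using diag_units_iff[OF qo] diag_units_iff[OF x] sm by simp
qed

lemma nabs_nform_diff_four_mult: "nabs (nform x - 4*c) = p^2 * nabs (nform x / 4 - c)"
  by (metis nabs_four_mult four_mult_quarter_diff)

lemma nform_diff_four_le_iff:
  assumes l: "l \<ge> 1"
  shows "nabs (nform x - 4*c) \<le> p^(Suc l) \<longleftrightarrow> nabs (nform x / 4 - c) \<le> p^(l-1)"
proof -
  have "p^2 > 0" using p_pos by simp
  thus ?thesis unfolding nabs_nform_diff_four_mult p2_mult_p_power[OF l, symmetric]
    by (rule mult_le_cancel_left_pos)
qed

lemma nclasses_diag_units_level_eq:
  assumes l: "l \<ge> 2" and c: "nabs c = 1"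
  shows "nclasses 4 (Suc l) {x\<in>diag_units. nabs (nform x - 4*c) \<le> p^(Suc l)}
    = nclasses 4 (Suc l) {x\<in>diag_units. nabs (nform x - 4) \<le> p^(Suc l)}"
proof -
  obtain d where d: "d \<in> obox nabs 4" "nabs (nform d - c) \<le> p^(l-1)" using nform_approx_unit c by blast
  have "p^(l-1) < 1" using p_Suc_power_less_1[of "l-2"] l by (simp add: Suc_diff_Suc numeral_2_eq_2)
  hence d1: "nabs (nform d) = 1" using nabs_add_dominant[of "nform d - c" c] d c by simp
  have "nabs (nform d * 4 - 4 * c) = p^2 * nabs (nform d - c)"
    using nabs_four_mult[of "nform d - c"] by (simp add: algebra_simps)
  also have "\<dots> \<le> p^2 * p^(l-1)" using d p_pos by simp
  finally have r: "nabs (nform d * 4 - 4 * c) \<le> p^(Suc l)" using p2_mult_p_power l by simp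
  show ?thesis
    by (rule nclasses_fibre_translate[OF d(1) d1 _ _ r])
      (use qmult_diag_units_iff d d1 in \<open>auto simp: diag_units_def\<close>)
qed

lemma nclasses_diag_units_by_fibres:
  assumes l: "l \<ge> 2"
  shows "nclasses 4 (Suc l) diag_units
    = nclasses 4 (Suc l) {x\<in>diag_units. nabs (nform x - 4) \<le> p^(Suc l)} * nclasses 1 (l-1) units1"
proof (rule nclasses_by_fibres)
  show "diag_units \<subseteq> obox nabs 4" by (auto simp: diag_units_def)
  show "units1 \<subseteq> obox nabs 1" by (auto simp: units1_def)
  show "vec1 (nform x / 4) \<in> units1" if "x \<in> diag_units" for x
    using nform_diag_units[OF that] p_pos by (simp add: units1_def vec1_def obox_iff nabs_divide nabs_four)
  show "nabs (nform x / 4 - nform y / 4) \<le> p^(l-1)"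
    if "x \<in> diag_units" "y \<in> diag_units" "vcong nabs 4 (Suc l) x y" for x y
  proof -
    have "nabs (nform x - nform y) \<le> p^(Suc l)"
      by (rule nform_vcong) (use that in \<open>auto simp: diag_units_def\<close>)
    thus ?thesis using nform_diff_four_le_iff[of l x "nform y / 4"] l four_nonzero by simp
  qed
  fix c assume "vec1 c \<in> units1"
  hence "nabs c = 1" by (simp add: units1_def vec1_def)
  thus "nclasses 4 (Suc l) {x\<in>diag_units. nabs (nform x / 4 - c) \<le> p^(l-1)}
      = nclasses 4 (Suc l) {x\<in>diag_units. nabs (nform x - 4) \<le> p^(Suc l)}"
    using nclasses_diag_units_level_eq[OF l] nform_diff_four_le_iff[of l] l by simp
qed

lemma nclasses_diag_units_level:
  assumes l: "l \<ge> 2" and c: "nabs c = 1"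
  shows "nclasses 4 (Suc l) {x\<in>diag_units. nabs (nform x - 4*c) \<le> p^(Suc l)} = q^(3*l+2)"
proof -
  define N where "N = nclasses 4 (Suc l) {x\<in>diag_units. nabs (nform x - 4) \<le> p^(Suc l)}"
  obtain j where j: "l = Suc (Suc j)" using l by (metis add_2_eq_Suc le_Suc_ex)
  have "N * (q^(Suc j) - q^j) = q^(4*l) * (q - 1)"
    using nclasses_diag_units_by_fibres[OF l] nclasses_add[OF saturated_diag_units, of l]
      nclasses_diag_units nclasses_units1[of j] j by (simp add: N_def)
  moreover have "q^(4*l) = q^j * q^(3*l+2)" using j by (simp add: add.commute flip: power_add)
  ultimately have "N * q^j * (q - 1) = q^j * q^(3*l+2) * (q - 1)"
    by (simp add: algebra_simps)
  moreover have "q - 1 > 0" "q^j > 0" using q_ge_2 by auto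
  ultimately have "N = q^(3*l+2)" by simp
  thus ?thesis using nclasses_diag_units_level_eq[OF l c] by (simp add: N_def)
qed

lemma nform_double: "nform (double w) = 4 * nform w"
  unfolding nform_def double_def by (simp add: algebra_simps power2_eq_square)

lemma nform_double_obox: "x \<in> double_obox 4 \<Longrightarrow> nabs (nform x) \<le> p^2"
proof -
  assume "x \<in> double_obox 4"
  then obtain w where w: "w \<in> obox nabs 4" "x = double w" using double_obox_eq_image by blast
  have "nabs (nform w) \<le> 1" using nform_integral obox4_integral w by blast
  thus ?thesis using w p_pos by (simp add: nform_double nabs_mult nabs_four mult_left_le)
qed

lemma nclasses_level_set_0:
  assumes r: "nabs \<rho> \<le> p^2"
  shows "nclasses 4 1 (level_set 0 \<rho>) = q^3"
proof -
  have "level_set 0 \<rho> = nonunit_norms"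
  proof -
    have "nabs (nform x - \<rho>) \<le> p \<longleftrightarrow> nabs (nform x) \<le> p" for x
    proof
      assume "nabs (nform x - \<rho>) \<le> p"
      hence "nabs ((nform x - \<rho>) + \<rho>) \<le> p" using r p2_le_p by (intro nabs_add_le) auto
      thus "nabs (nform x) \<le> p" by simp
    qed (use r p2_le_p nabs_diff_le in auto)
    thus ?thesis by (auto simp: level_set_def nonunit_norms_def)
  qed
  thus ?thesis using nclasses_nonunit_norms by simp
qed

lemma nclasses_level_set_1:
  assumes r: "nabs \<rho> \<le> p^2"
  shows "nclasses 4 2 (level_set 1 \<rho>) = q^5"
proof -
  have "level_set 1 \<rho> = double_obox 4 \<union> diag_units"
  proof -
    have "nabs (nform x - \<rho>) \<le> p^2 \<longleftrightarrow> nabs (nform x) \<le> p^2" for x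
    proof
      assume "nabs (nform x - \<rho>) \<le> p^2"
      hence "nabs ((nform x - \<rho>) + \<rho>) \<le> p^2" using r by (intro nabs_add_le) auto
      thus "nabs (nform x) \<le> p^2" by simp
    qed (use r nabs_diff_le in auto)
    moreover have "x \<in> double_obox 4 \<union> diag_units \<longleftrightarrow> nabs (nform x) \<le> p^2" if "x \<in> obox nabs 4" for x
      using nform_double_obox nform_diag_units nform_gt_p2[OF that] by force
    ultimately show ?thesis unfolding level_set_def
      by (auto simp: double_obox_def diag_units_def power2_eq_square)
  qed
  moreover have "saturated 4 1 (double_obox 4 \<union> diag_units)"
    using saturated_double_obox saturated_diag_units unfolding saturated_def by blast
  hence "nclasses 4 (1+1) (double_obox 4 \<union> diag_units) = q^(4*1) * nclasses 4 1 (double_obox 4 \<union> diag_units)"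
    by (rule nclasses_add)
  moreover have "nclasses 4 1 (double_obox 4 \<union> diag_units) = 1 + (q - 1)"
    using nclasses_Un[OF saturated_double_obox saturated_diag_units double_obox_diag_units_disjoint] nclasses_double_obox[of 4 0] nclasses_diag_units
    by simp
  ultimately show ?thesis using q_ge_2 by (simp add: numeral_eq_Suc)
qed

lemma level_set_subset:
  assumes l: "l \<ge> 1" and r: "nabs \<rho> \<le> p^2"
  shows "level_set l \<rho> \<subseteq> double_obox 4 \<union> diag_units"
proof
  fix x assume x: "x \<in> level_set l \<rho>"
  have xo: "x \<in> obox nabs 4" "nabs (nform x - \<rho>) \<le> p^(Suc l)" using x by (auto simp: level_set_def)
  show "x \<in> double_obox 4 \<union> diag_units"
  proof (rule ccontr)
    assume "x \<notin> double_obox 4 \<union> diag_units"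
    hence gt: "p^2 < nabs (nform x)" using nform_gt_p2 xo by blast
    hence "nabs (nform x - \<rho>) = nabs (nform x)" using r nabs_diff_dominant by simp
    thus False using xo gt p_power_le_iff[of "Suc l" 2] l by simp
  qed
qed

lemma level_set_Int_double_obox:
  assumes l: "l \<ge> 2"
  shows "level_set l \<rho> \<inter> double_obox 4 = double ` level_set (l-2) (\<rho>/4)"
proof -
  have scale: "nabs (nform (double w) - \<rho>) \<le> p^(Suc l) \<longleftrightarrow> nabs (nform w - \<rho>/4) \<le> p^(Suc (l-2))" for w
  proof -
    have "nabs (nform (double w) - \<rho>) = p^2 * nabs (nform w - \<rho>/4)"
      by (metis four_mult_diff_quarter nabs_four_mult nform_double)
    moreover have "Suc l = 2 + Suc (l-2)" using l by simp
    hence "p^(Suc l) = p^2 * p^(Suc (l-2))" by (metis power_add)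
    ultimately show ?thesis using p_pos by simp
  qed
  show ?thesis
  proof
    show "level_set l \<rho> \<inter> double_obox 4 \<subseteq> double ` level_set (l-2) (\<rho>/4)"
      using scale by (auto simp: double_obox_eq_image level_set_def)
    show "double ` level_set (l-2) (\<rho>/4) \<subseteq> level_set l \<rho> \<inter> double_obox 4"
      using scale double_in_obox by (auto simp: double_obox_eq_image level_set_def)
  qed
qed

lemma nclasses_level_set_Int_diag_units:
  assumes l: "l \<ge> 2" and r: "nabs \<rho> \<le> p^2"
  shows "nclasses 4 (Suc l) (level_set l \<rho> \<inter> diag_units) = (if nabs \<rho> = p^2 then q^(3*l+2) else 0)"
proof (cases "nabs \<rho> = p^2")
  case True
  have c1: "nabs (\<rho>/4) = 1" using True p_pos by (simp add: nabs_divide nabs_four)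
  have "level_set l \<rho> \<inter> diag_units = {x\<in>diag_units. nabs (nform x - 4*(\<rho>/4)) \<le> p^(Suc l)}"
    using four_nonzero by (auto simp: level_set_def diag_units_def)
  thus ?thesis using nclasses_diag_units_level[OF l c1] True by simp
next
  case False
  hence r3: "nabs \<rho> < p^2" using r by simp
  have "level_set l \<rho> \<inter> diag_units = {}"
  proof (rule ccontr)
    assume "level_set l \<rho> \<inter> diag_units \<noteq> {}"
    then obtain x where x: "x \<in> level_set l \<rho>" "x \<in> diag_units" by blast
    have "nabs (nform x - \<rho>) = p^2"
      using nabs_diff_dominant[of \<rho> "nform x"] nform_diag_units[OF x(2)] r3 by simp
    moreover have "nabs (nform x - \<rho>) \<le> p^(Suc l)" using x by (simp add: level_set_def)
    moreover have "p^(Suc l) < p^2" using p_power_less_iff[of "Suc l" 2] l by simp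
    ultimately show False by simp
  qed
  thus ?thesis using False by (simp add: nclasses_def)
qed

lemma nclasses_level_set_step:
  assumes l: "l \<ge> 2" and r: "nabs \<rho> \<le> p^2"
  shows "nclasses 4 (Suc l) (level_set l \<rho>)
    = q^4 * nclasses 4 (l-1) (level_set (l-2) (\<rho>/4)) + (if nabs \<rho> = p^2 then q^(3*l+2) else 0)"
proof -
  have "level_set l \<rho> = (level_set l \<rho> \<inter> double_obox 4) \<union> (level_set l \<rho> \<inter> diag_units)"
    using level_set_subset[of l] l r by auto
  moreover have "saturated 4 (Suc l) (level_set l \<rho> \<inter> double_obox 4)"
    "saturated 4 (Suc l) (level_set l \<rho> \<inter> diag_units)"
    using saturated_Int saturated_level_set saturated_mono[OF saturated_double_obox]
      saturated_mono[OF saturated_diag_units] by simp_all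
  ultimately have "nclasses 4 (Suc l) (level_set l \<rho>)
      = nclasses 4 (Suc l) (level_set l \<rho> \<inter> double_obox 4) + nclasses 4 (Suc l) (level_set l \<rho> \<inter> diag_units)"
    using nclasses_Un double_obox_diag_units_disjoint by (metis Int_assoc Int_empty_right Int_left_commute)
  moreover have "nclasses 4 (Suc l) (level_set l \<rho> \<inter> double_obox 4) = nclasses 4 (Suc (l-1)) (level_set (l-2) (\<rho>/4))"
    using nclasses_double[of "level_set (l-2) (\<rho>/4)" 4 l] level_set_Int_double_obox[OF l] l
    by (auto simp: level_set_def)
  moreover have "nclasses 4 (Suc (l-1)) (level_set (l-2) (\<rho>/4)) = q^4 * nclasses 4 (l-1) (level_set (l-2) (\<rho>/4))"
    using nclasses_Suc[of 4 "l-1" "level_set (l-2) (\<rho>/4)"] saturated_level_set[of "l-2" "\<rho>/4"] l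
    by (simp add: Suc_diff_Suc numeral_2_eq_2)
  ultimately show ?thesis using nclasses_level_set_Int_diag_units[OF l r] by simp
qed

lemma XB_0: "nabs \<rho> \<le> p^2 \<Longrightarrow> XB 0 \<rho> = p"
proof -
  assume r: "nabs \<rho> \<le> p^2"
  have "XB 0 \<rho> = real q^3 * p^4" using XB_eq_nclasses[of \<rho> 0] nclasses_level_set_0[OF r] by simp
  also have "\<dots> = (real q^3 * p^3) * p" by (simp add: power_Suc[symmetric] numeral_eq_Suc)
  also have "\<dots> = p" using q_power_mult_p_power[of 3] by simp
  finally show ?thesis .
qed

lemma XB_1: "nabs \<rho> \<le> p^2 \<Longrightarrow> XB 1 \<rho> = p^3"
proof -
  assume r: "nabs \<rho> \<le> p^2"
  have "XB 1 \<rho> = real q^5 * p^8"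
    using XB_eq_nclasses[of \<rho> 1] nclasses_level_set_1[OF r] by (simp add: numeral_eq_Suc)
  also have "\<dots> = (real q^5 * p^5) * p^3" by (simp add: power_add[symmetric])
  also have "\<dots> = p^3" using q_power_mult_p_power[of 5] by simp
  finally show ?thesis .
qed

lemma XB_step:
  assumes l: "l \<ge> 2" and r: "nabs \<rho> \<le> p^2"
  shows "XB l \<rho> = p^4 * XB (l-2) (\<rho>/4) + (if nabs \<rho> = p^2 then p^(l+2) else 0)"
proof -
  obtain j where j: "l = j + 2" using l by (metis add.commute le_iff_add)
  define M' where "M' = nclasses 4 (Suc j) (level_set j (\<rho>/4))"
  have M: "nclasses 4 (Suc l) (level_set l \<rho>) = q^4 * M' + (if nabs \<rho> = p^2 then q^(3*l+2) else 0)"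
    using nclasses_level_set_step[OF l r] j by (simp add: M'_def)
  have X': "XB (l-2) (\<rho>/4) = real M' * p^(4*Suc j)" using XB_eq_nclasses j M'_def by simp
  have a: "real (q^4 * M') * p^(4*Suc l) = p^4 * (real M' * p^(4*Suc j))"
  proof -
    have "4 * Suc l = 4 + (4 + 4*Suc j)" using j by simp
    hence e1: "p^(4*Suc l) = p^4 * p^4 * p^(4*Suc j)" by (simp add: power_add)
    have "real (q^4 * M') * p^(4*Suc l) = (real q^4 * p^4) * (p^4 * (real M' * p^(4*Suc j)))"
      unfolding e1 by (simp add: algebra_simps)
    thus ?thesis using q_power_mult_p_power[of 4] by simp
  qed
  have b: "real (q^(3*l+2)) * p^(4*Suc l) = p^(l+2)"
  proof -
    have "4 * Suc l = (3*l+2) + (l+2)" by simp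
    hence e1: "p^(4*Suc l) = p^(3*l+2) * p^(l+2)" by (metis power_add)
    have "real (q^(3*l+2)) * p^(4*Suc l) = (real q^(3*l+2) * p^(3*l+2)) * p^(l+2)"
      by (simp only: e1 of_nat_power mult.assoc)
    thus ?thesis by (simp only: q_power_mult_p_power mult_1_left)
  qed
  show ?thesis using XB_eq_nclasses[of \<rho> l] M X' a b by (auto simp: algebra_simps)
qed

definition Xsq :: "nat \<Rightarrow> nat \<Rightarrow> real" where
  "Xsq T l = p^(1+2*l) + (if 2*T \<le> l then p^(4*T) * ((1+p)*p^(l-2*T) - p^(1+2*(l-2*T))) else 0)"

lemma XB_low_levels: "l \<le> 1 \<Longrightarrow> nabs \<rho> \<le> p^2 \<Longrightarrow> XB l \<rho> = p^(1+2*l)"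
  using XB_0 XB_1 by (cases l) (auto simp: numeral_3_eq_3)

lemma Xsq_low_levels: "l < 2*T \<Longrightarrow> Xsq T l = p^(1+2*l)"
  by (simp add: Xsq_def)

lemma Xsq_1: "l \<ge> 2 \<Longrightarrow> Xsq 1 l = p^4 * p^(l-1) + p^(l+2)"
  by (auto simp: Xsq_def algebra_simps power_add numeral_eq_Suc dest!: le_Suc_ex)

lemma Xsq_Suc: "l \<ge> 2 \<Longrightarrow> Xsq (Suc T) l = p^4 * Xsq T (l-2)"
proof -
  assume "l \<ge> 2"
  then obtain j where j: "l = j + 2" by (metis add.commute le_iff_add)
  show ?thesis
  proof (cases "2*T \<le> j")
    case True
    then obtain i where "j = 2*T + i" using le_Suc_ex by blast
    thus ?thesis using j by (simp add: Xsq_def algebra_simps power_add numeral_eq_Suc)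
  next
    case False
    thus ?thesis using j by (simp add: Xsq_def algebra_simps power_add numeral_eq_Suc)
  qed
qed

lemma XB_square: "t \<noteq> 0 \<Longrightarrow> nabs t = p^(Suc n) \<Longrightarrow> XB l (t^2) = Xsq (Suc n) l"
proof (induction n arbitrary: t l)
  case 0
  have r: "nabs (t^2) = p^2" using 0 by (simp add: power2_eq_square nabs_mult)
  show ?case
  proof (cases "l \<le> 1")
    case True thus ?thesis using XB_low_levels r Xsq_low_levels by simp
  next
    case False
    have "nabs (t^2/4) = 1" using r p_pos by (simp add: nabs_divide nabs_four)
    hence "XB (l-2) (t^2/4) = p^(Suc (l-2))" by (rule XB_unit)
    moreover have "Suc (l-2) = l-1" using False by simp
    ultimately show ?thesis using XB_step[of l "t^2"] r False Xsq_1 by (simp del: Suc_diff_Suc)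
  qed
next
  case (Suc n)
  have "nabs (t^2) = (p^(Suc (Suc n)))^2" using Suc.prems by simp
  hence "nabs (t^2) = p^(2*Suc (Suc n))" by (metis power_mult mult.commute)
  hence r2: "nabs (t^2) \<le> p^2" and r3: "nabs (t^2) \<noteq> p^2"
    using p_power_le_iff[of "2*Suc (Suc n)" 2] p_power_less_iff[of "2*Suc (Suc n)" 2] by auto
  show ?case
  proof (cases "l \<le> 1")
    case True thus ?thesis using XB_low_levels r2 Xsq_low_levels by simp
  next
    case False
    have "t/2 \<noteq> 0" "nabs (t/2) = p^(Suc n)"
      using Suc.prems two_nonzero p_pos by (auto simp: nabs_divide nabs_two)
    hence "XB (l-2) ((t/2)^2) = Xsq (Suc n) (l-2)" by (rule Suc.IH)
    hence "XB (l-2) (t^2/4) = Xsq (Suc n) (l-2)" by (simp add: power_divide)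
    thus ?thesis using XB_step[of l "t^2"] r2 r3 False Xsq_Suc by simp
  qed
qed

end

section \<open>Generating series\<close>

lemma norm_mult_power_less_1:
  fixes z P :: "'a::real_normed_div_algebra"
  assumes "norm z < 1" "norm P \<le> 1"
  shows "norm (z * P^k) < 1"
proof -
  have "norm (P^k) \<le> 1" using assms(2) by (simp add: norm_power power_le_one)
  hence "norm z * norm (P^k) \<le> norm z" by (simp add: mult_left_le)
  thus ?thesis using assms(1) by (simp add: norm_mult)
qed

lemma generating_function_identity:
  fixes z P Q :: complex
  assumes QP: "Q * P = 1" and d1: "1 - z*P \<noteq> 0" and d2: "1 - z*P^2 \<noteq> 0"
  shows "P/(1-z*P^2) + z^(2*T)*P^(4*T)*((1+P)/(1-z*P) - P/(1-z*P^2))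
    = P/(1 - (z*P)/Q) + (z*P)^(2*T)/Q^(2*T) * (1 - (z*P)/Q^2)/((1 - z*P)*(1 - (z*P)/Q))"
proof -
  have P0: "P \<noteq> 0" "Q \<noteq> 0" using QP by auto
  have Qi: "Q = 1/P" using QP P0 by (simp add: field_simps)
  have e1: "(z*P)/Q = z*P^2" using Qi by (simp add: power2_eq_square)
  have e2: "(z*P)^(2*T)/Q^(2*T) = z^(2*T)*P^(4*T)"
  proof -
    have "(z*P)^(2*T)/Q^(2*T) = z^(2*T)*P^(2*T)*P^(2*T)"
      using Qi by (simp add: power_mult_distrib power_one_over)
    also have "\<dots> = z^(2*T)*P^(4*T)" by (simp add: power_add[symmetric])
    finally show ?thesis .
  qed
  have e3: "(z*P)/Q^2 = z*P^3" using Qi by (simp add: power2_eq_square power3_eq_cube)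
  have key: "(1+P)/(1-z*P) - P/(1-z*P^2) = (1 - z*P^3)/((1-z*P)*(1-z*P^2))"
    using d1 d2 by (simp add: field_simps power2_eq_square power3_eq_cube)
  show ?thesis unfolding e1 e2 e3 key by (simp add: field_simps)
qed

context quaternion_norm_form begin

lemma XB_unit_series:
  fixes z :: complex
  assumes z: "norm z < 1"
  shows "(\<lambda>l. z^l * of_real (XB l 1)) sums (of_real p / (1 - z * of_real p))"
proof -
  have "(\<lambda>l. z^l * of_real (XB l 1)) = (\<lambda>l. of_real p * (z * of_real p)^l)"
    using XB_unit[of 1] by (simp add: power_mult_distrib fun_eq_iff)
  moreover have "(\<lambda>l. (z * of_real p)^l) sums (1 / (1 - z * of_real p))"
    using geometric_sums norm_mult_power_less_1[OF z, of "of_real p" 1] p_pos p_less_1 by simp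
  ultimately show ?thesis using sums_mult[of _ _ "of_real p"] by fastforce
qed

lemma Xsq_series:
  fixes z :: complex
  defines "P \<equiv> complex_of_real p"
  assumes z: "norm z < 1"
  shows "(\<lambda>l. z^l * of_real (Xsq T l)) sums
    (P / (1 - z*P^2) + z^(2*T) * P^(4*T) * ((1+P) / (1 - z*P) - P / (1 - z*P^2)))"
proof -
  have P: "norm P \<le> 1" using p_pos p_less_1 by (simp add: P_def)
  have g1: "(\<lambda>i. (z*P)^i) sums (1 / (1 - z*P))"
    using geometric_sums norm_mult_power_less_1[OF z P, of 1] by simp
  have g2: "(\<lambda>i. (z*P^2)^i) sums (1 / (1 - z*P^2))"
    by (rule geometric_sums[OF norm_mult_power_less_1[OF z P]])
  define A where "A = z^(2*T) * P^(4*T)"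
  define f where "f l = (if 2*T \<le> l then z^l * (P^(4*T) * ((1+P)*P^(l-2*T) - P^(1+2*(l-2*T)))) else 0)" for l
  have "(\<lambda>l. z^l * of_real (Xsq T l)) = (\<lambda>l. P * (z*P^2)^l + f l)"
    by (auto simp: fun_eq_iff Xsq_def f_def P_def algebra_simps power_mult_distrib power_add
      simp flip: power_mult)
  moreover have "(\<lambda>l. P * (z*P^2)^l) sums (P / (1 - z*P^2))"
    using sums_mult[OF g2, of P] by simp
  moreover have "f sums (A * ((1+P) / (1 - z*P) - P / (1 - z*P^2)))"
  proof -
    have "(\<lambda>i. f (i + 2*T)) = (\<lambda>i. A * ((1+P) * (z*P)^i - P * (z*P^2)^i))"
      by (simp add: f_def A_def fun_eq_iff power_add power_mult_distrib algebra_simps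
        flip: power_mult)
    moreover have "(\<lambda>i. A * ((1+P) * (z*P)^i - P * (z*P^2)^i)) sums
        (A * ((1+P) * (1 / (1 - z*P)) - P * (1 / (1 - z*P^2))))"
      by (intro sums_mult sums_diff g1 g2)
    moreover have "(\<Sum>i<2*T. f i) = 0" by (simp add: f_def)
    ultimately show ?thesis using sums_iff_shift[of f "2*T"] by simp
  qed
  ultimately show ?thesis unfolding A_def by (simp add: sums_add)
qed

lemma XB_square_series:
  fixes z :: complex
  defines "P \<equiv> complex_of_real p"
  assumes z: "norm z < 1" and t: "t \<noteq> 0" "nabs t = p^T" and T: "T \<ge> 1"
  shows "(\<lambda>l. z^l * of_real (XB l (t^2))) sums
    (P / (1 - z*P^2) + z^(2*T) * P^(4*T) * ((1+P) / (1 - z*P) - P / (1 - z*P^2)))"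
proof -
  obtain n where n: "T = Suc n" using T by (cases T) auto
  have "XB l (t^2) = Xsq T l" for l using XB_square[OF t(1)] t(2) n by simp
  thus ?thesis using Xsq_series[OF z, of T] by (simp add: P_def)
qed

end

theorem proposition8p1:
  fixes nabs :: "'k::field \<Rightarrow> real" and a u t :: 'k and B :: "(nat \<Rightarrow> 'k) \<Rightarrow> 'k"
    and T q :: nat and \<beta> z w :: complex
  assumes k: "unram_2adic_local_field nabs"
    and q: "q = residue_card nabs"
    and u: "nabs u = 1" and a: "a = 1 + 2 * u" and hil: "hilbert_symbol a (-1) = -1"
    and B: "B = (\<lambda>x. x 0 ^ 2 + x 1 ^ 2 - a * (x 2 ^ 2 + x 3 ^ 2))"
    and \<beta>: "Re \<beta> > 0"
    and z: "z = of_real (real q) powr (-\<beta>)" and w: "w = z / of_nat q"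
    and t: "t \<noteq> 0" "nabs t \<le> 1" "nabs t = (1 / real q) ^ T"
  shows "(\<lambda>l. z ^ l * of_real (X_l nabs 4 B 1 l)) sums (of_real (nabs 2) / (1 - w)) \<and>
    (T \<ge> 1 \<longrightarrow>
      (\<lambda>l. z ^ l * of_real (X_l nabs 4 B (t ^ 2) l)) sums
        (of_real (nabs 2) / (1 - w / of_nat q)
         + w ^ (2 * T) / of_nat q ^ (2 * T) * (1 - w / of_nat q ^ 2)
             / ((1 - w) * (1 - w / of_nat q))))"
proof -
  interpret L: quaternion_norm_form nabs u
    by unfold_locales (use k u hil a in auto)
  define P where "P = complex_of_real L.p"
  have B_nform: "B = L.nform" using B a by (simp add: L.nform_def L.a_def fun_eq_iff)
  have qP: "of_nat q * P = 1" using L.p_eq q L.q_ge_2 by (simp add: P_def)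
  hence "inverse (of_nat q) = P" by (rule inverse_unique)
  hence wP: "w = z * P" using w by (simp add: divide_inverse mult.commute)
  have "norm z = real q powr (- Re \<beta>)" unfolding z by (simp add: norm_powr_real_powr)
  also have "\<dots> < 1" using q L.q_ge_2 \<beta> by (intro powr_less_one) auto
  finally have z1: "norm z < 1" .
  have P1: "norm P \<le> 1" using L.p_pos L.p_less_1 by (simp add: P_def)
  have "1 - z*P \<noteq> 0" "1 - z*P^2 \<noteq> 0"
    using norm_mult_power_less_1[OF z1 P1, of 1] norm_mult_power_less_1[OF z1 P1, of 2] by auto
  note closed_form = generating_function_identity[OF qP this, of T]
  have tT: "nabs t = L.p ^ T" using t(3) L.p_eq q by simp
  show ?thesis
    using L.XB_unit_series[OF z1] L.XB_square_series[OF z1 t(1) tT] closed_form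
    by (simp add: B_nform wP P_def L.nabs_two)
qed

end
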